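(* Let $(\omega,\nabla)$ be Poisson-compatible. For 1-forms $\eta=\eta_pdx^p$, $\xi=\xi_jdx^j$, $$\wedge_1(\sigma_Q+\mathrm{id}^{\otimes2})(\eta\otimes_1\xi)=\tfrac12\lambda\,\xi_j\eta_p\,\omega^{ji}T^p{}_{nk;i}\,dx^k\wedge dx^n,$$ so the quantum torsion $\wedge_1\nabla_Q-d$ of $\nabla_Q$ is a right $A_1$-module map if and only if $\omega^{ji}T^p{}_{nk;i}=0$ for all indices.
   Context: Coordinates $x^i$, summation convention. $\nabla_jdx^i=-\Gamma^i_{jk}dx^k$; torsion $T^i_{jk}=\Gamma^i_{jk}-\Gamma^i_{kj}$; curvature $[\nabla_i,\nabla_j]dx^k=-R^k{}_{mij}dx^m$; semicolon = covariant derivative w.r.t. $\nabla$. Poisson-compatible: $d(\omega^{ij})-\omega^{kj}\nabla_k(dx^i)-\omega^{ik}\nabla_k(dx^j)=0$. Work over $\mathbb{C}[\lambda]/(\lambda^2)$. $A_1$: functions with $a\bullet b=ab+\frac\lambda2\omega^{ij}a_{,i}b_{,j}$; $\Omega^1A_1$: 1-forms with $a\bullet\xi=a\xi+\frac\lambda2\omega^{ij}a_{,i}\nabla_j\xi$, $\xi\bullet a=a\xi-\frac\lambda2\omega^{ij}a_{,i}\nabla_j\xi$; $\otimes_1$ over $A_1$; $q(\xi\otimes_1\eta)=\xi\otimes_0\eta+\frac\lambda2\omega^{ij}\nabla_i\xi\otimes_0\nabla_j\eta$. $\nabla_Q\xi=q^{-1}(dx^k\otimes_0\nabla_k\xi)-\frac\lambda2\omega^{ij}dx^k\otimes_1[\nabla_k,\nabla_j]\nabla_i\xi$,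 $\sigma_Q(\eta\otimes_1\xi)=\xi\otimes_1\eta+\lambda\omega^{ij}\nabla_j\xi\otimes_1\nabla_i\eta+\lambda\omega^{ij}\xi_jdx^k\otimes_1[\nabla_k,\nabla_i]\eta$. $\xi\wedge_1\eta=\xi\wedge\eta+\frac\lambda2\omega^{ij}\nabla_i\xi\wedge\nabla_j\eta+\lambda(-1)^{|\xi|+1}H^{ij}\wedge(\partial_i\lrcorner\xi)\wedge(\partial_j\lrcorner\eta)$, $H^{ij}=\frac14\omega^{is}(T^j{}_{nm;s}-2R^j{}_{nms})dx^m\wedge dx^n$. *)

theory Defs
  imports "HOL-Analysis.Analysis"
begin

text \<open>Local coordinate setting: an open set U in R^n (index type 'n), functions are
complex valued (we work over C), the Poisson bivector omega^{ij} and the Christoffel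
symbols Gamma^i_{jk} (written Ga i j k) are real valued.
A 1-form xi = xi_m dx^m is its component function 'n => (real^'n => complex).
An element of C[lambda]/(lambda^2) tensor V is a pair (order 0 part, order 1 part).\<close>

type_synonym 'n fn = "real^'n \<Rightarrow> complex"
type_synonym 'n form1 = "'n \<Rightarrow> real^'n \<Rightarrow> complex"
type_synonym 'n ten2 = "'n \<Rightarrow> 'n \<Rightarrow> real^'n \<Rightarrow> complex"
type_synonym 'n bivec = "'n \<Rightarrow> 'n \<Rightarrow> real^'n \<Rightarrow> real"
type_synonym 'n chris = "'n \<Rightarrow> 'n \<Rightarrow> 'n \<Rightarrow> real^'n \<Rightarrow> real"

definition pd :: "'n::finite \<Rightarrow> (real^'n \<Rightarrow> 'b::real_normed_vector) \<Rightarrow> real^'n \<Rightarrow> 'b" where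
  "pd i f x = vector_derivative (\<lambda>t. f (x + t *\<^sub>R axis i 1)) (at 0)"

fun pds :: "'n::finite list \<Rightarrow> (real^'n \<Rightarrow> 'b::real_normed_vector) \<Rightarrow> real^'n \<Rightarrow> 'b" where
  "pds [] f = f"
| "pds (i # is) f = pd i (pds is f)"

definition smooth_on :: "(real^'n::finite) set \<Rightarrow> (real^'n \<Rightarrow> 'b::real_normed_vector) \<Rightarrow> bool" where
  "smooth_on U f \<longleftrightarrow> (\<forall>is. \<forall>x\<in>U. pds is f differentiable (at x))"

definition lsmooth1 :: "(real^'n::finite) set \<Rightarrow> 'n form1 \<times> 'n form1 \<Rightarrow> bool" where
  "lsmooth1 U xi \<longleftrightarrow> (\<forall>m. smooth_on U (fst xi m) \<and> smooth_on U (snd xi m))"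

definition lsmooth0 :: "(real^'n::finite) set \<Rightarrow> 'n fn \<times> 'n fn \<Rightarrow> bool" where
  "lsmooth0 U a \<longleftrightarrow> smooth_on U (fst a) \<and> smooth_on U (snd a)"

text \<open>Covariant derivative nabla_j of a 1-form, from nabla_j dx^i = - Gamma^i_{jk} dx^k.\<close>
definition cd :: "'n::finite chris \<Rightarrow> 'n \<Rightarrow> 'n form1 \<Rightarrow> 'n form1" where
  "cd Ga j xi = (\<lambda>k x. pd j (xi k) x - (\<Sum>i\<in>UNIV. complex_of_real (Ga i j k x) * xi i x))"

definition dxf :: "'n::finite \<Rightarrow> 'n form1" where
  "dxf k = (\<lambda>m x. if m = k then 1 else 0)"

definition comm :: "'n::finite chris \<Rightarrow> 'n \<Rightarrow> 'n \<Rightarrow> 'n form1 \<Rightarrow> 'n form1" where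
  "comm Ga k j a = (\<lambda>m x. cd Ga k (cd Ga j a) m x - cd Ga j (cd Ga k a) m x)"

text \<open>Curvature R^k_{m i j}, defined by [nabla_i, nabla_j] dx^k = - R^k_{m i j} dx^m.\<close>
definition curv :: "'n::finite chris \<Rightarrow> 'n \<Rightarrow> 'n \<Rightarrow> 'n \<Rightarrow> 'n \<Rightarrow> real^'n \<Rightarrow> complex" where
  "curv Ga k m i j x = - comm Ga i j (dxf k) m x"

definition tors :: "'n::finite chris \<Rightarrow> 'n \<Rightarrow> 'n \<Rightarrow> 'n \<Rightarrow> real^'n \<Rightarrow> real" where
  "tors Ga p n k x = Ga p n k x - Ga p k n x"

definition tors_cov :: "'n::finite chris \<Rightarrow> 'n \<Rightarrow> 'n \<Rightarrow> 'n \<Rightarrow> 'n \<Rightarrow> real^'n \<Rightarrow> real" where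
  "tors_cov Ga p n k i x = pd i (tors Ga p n k) x
     + (\<Sum>s\<in>UNIV. Ga p i s x * tors Ga s n k x)
     - (\<Sum>s\<in>UNIV. Ga s i n x * tors Ga p s k x)
     - (\<Sum>s\<in>UNIV. Ga s i k x * tors Ga p n s x)"

text \<open>Coefficient of dx^m wedge dx^n in H^{ij}.\<close>
definition Hc :: "'n::finite bivec \<Rightarrow> 'n chris \<Rightarrow> 'n \<Rightarrow> 'n \<Rightarrow> 'n \<Rightarrow> 'n \<Rightarrow> real^'n \<Rightarrow> complex" where
  "Hc om Ga i j m n x = (1/4) * (\<Sum>s\<in>UNIV. complex_of_real (om i s x) *
       (complex_of_real (tors_cov Ga j n m s x) - 2 * curv Ga j n m s x))"

text \<open>A 2-form given by a coefficient array c (meaning sum c_{mn} dx^m wedge dx^n)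
is identified with its alternating components alt c.\<close>
definition alt :: "'n ten2 \<Rightarrow> 'n ten2" where
  "alt c = (\<lambda>m n x. c m n x - c n m x)"

definition tprod :: "'n form1 \<Rightarrow> 'n form1 \<Rightarrow> 'n ten2" where
  "tprod a b = (\<lambda>m n x. a m x * b n x)"

definition tadd :: "'n ten2 \<Rightarrow> 'n ten2 \<Rightarrow> 'n ten2" where
  "tadd s t = (\<lambda>m n x. s m n x + t m n x)"

definition tsub :: "'n ten2 \<Rightarrow> 'n ten2 \<Rightarrow> 'n ten2" where
  "tsub s t = (\<lambda>m n x. s m n x - t m n x)"

definition ladd :: "'n ten2 \<times> 'n ten2 \<Rightarrow> 'n ten2 \<times> 'n ten2 \<Rightarrow> 'n ten2 \<times> 'n ten2" where
  "ladd p r = (tadd (fst p) (fst r), tadd (snd p) (snd r))"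

definition lsub :: "'n ten2 \<times> 'n ten2 \<Rightarrow> 'n ten2 \<times> 'n ten2 \<Rightarrow> 'n ten2 \<times> 'n ten2" where
  "lsub p r = (tsub (fst p) (fst r), tsub (snd p) (snd r))"

text \<open>xi wedge_1 eta for 1-forms xi, eta in Omega^1 A_1 (alternating components, order 0 and 1).
Here (-1)^(|xi|+1) = 1.\<close>
definition wedge1 :: "'n::finite bivec \<Rightarrow> 'n chris \<Rightarrow> 'n form1 \<times> 'n form1 \<Rightarrow> 'n form1 \<times> 'n form1
    \<Rightarrow> 'n ten2 \<times> 'n ten2" where
  "wedge1 om Ga xi eta =
    (alt (tprod (fst xi) (fst eta)),
     alt (\<lambda>m n x. tprod (fst xi) (snd eta) m n x + tprod (snd xi) (fst eta) m n x
        + (1/2) * (\<Sum>i\<in>UNIV. \<Sum>j\<in>UNIV. complex_of_real (om i j x) *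
                      tprod (cd Ga i (fst xi)) (cd Ga j (fst eta)) m n x)
        + (\<Sum>i\<in>UNIV. \<Sum>j\<in>UNIV. Hc om Ga i j m n x * fst xi i x * fst eta j x)))"

text \<open>Omega^1 A_1 tensor_1 Omega^1 A_1 is represented through the isomorphism q onto
Omega^1 tensor_0 Omega^1 [lambda]; tens1 xi eta is q(xi tensor_1 eta).\<close>
definition tens1 :: "'n::finite bivec \<Rightarrow> 'n chris \<Rightarrow> 'n form1 \<times> 'n form1 \<Rightarrow> 'n form1 \<times> 'n form1
    \<Rightarrow> 'n ten2 \<times> 'n ten2" where
  "tens1 om Ga xi eta =
    (tprod (fst xi) (fst eta),
     (\<lambda>m n x. tprod (fst xi) (snd eta) m n x + tprod (snd xi) (fst eta) m n x
        + (1/2) * (\<Sum>i\<in>UNIV. \<Sum>j\<in>UNIV. complex_of_real (om i j x) *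
                      tprod (cd Ga i (fst xi)) (cd Ga j (fst eta)) m n x)))"

definition wedgeQ :: "'n::finite bivec \<Rightarrow> 'n chris \<Rightarrow> 'n ten2 \<times> 'n ten2 \<Rightarrow> 'n ten2 \<times> 'n ten2" where
  "wedgeQ om Ga = (THE W. (\<forall>s t. W (ladd s t) = ladd (W s) (W t)) \<and>
                          (\<forall>xi eta. W (tens1 om Ga xi eta) = wedge1 om Ga xi eta))"

definition zten :: "'n ten2" where
  "zten = (\<lambda>m n x. 0)"

definition sigmaQ_el :: "'n::finite bivec \<Rightarrow> 'n chris \<Rightarrow> 'n form1 \<times> 'n form1 \<Rightarrow> 'n form1 \<times> 'n form1
    \<Rightarrow> 'n ten2 \<times> 'n ten2" where
  "sigmaQ_el om Ga eta xi = ladd (tens1 om Ga xi eta)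
     (zten, (\<lambda>m n x. (\<Sum>i\<in>UNIV. \<Sum>j\<in>UNIV. complex_of_real (om i j x) *
                         tprod (cd Ga j (fst xi)) (cd Ga i (fst eta)) m n x)
        + (\<Sum>i\<in>UNIV. \<Sum>j\<in>UNIV. \<Sum>k\<in>UNIV. complex_of_real (om i j x) * fst xi j x *
                         tprod (dxf k) (comm Ga k i (fst eta)) m n x)))"

text \<open>nabla_Q xi, in the q-representation (q^{-1}(dx^k tensor_0 nabla_k xi) is represented by
dx^k tensor_0 nabla_k xi itself).\<close>
definition nablaQ :: "'n::finite bivec \<Rightarrow> 'n chris \<Rightarrow> 'n form1 \<times> 'n form1 \<Rightarrow> 'n ten2 \<times> 'n ten2" where
  "nablaQ om Ga xi =
    ((\<lambda>k b x. cd Ga k (fst xi) b x),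
     (\<lambda>k b x. cd Ga k (snd xi) b x
        - (1/2) * (\<Sum>i\<in>UNIV. \<Sum>j\<in>UNIV. complex_of_real (om i j x) *
                     comm Ga k j (cd Ga i (fst xi)) b x)))"

definition dform :: "'n::finite form1 \<times> 'n form1 \<Rightarrow> 'n ten2 \<times> 'n ten2" where
  "dform xi = (alt (\<lambda>m n x. pd m (fst xi n) x), alt (\<lambda>m n x. pd m (snd xi n) x))"

definition torsQ :: "'n::finite bivec \<Rightarrow> 'n chris \<Rightarrow> 'n form1 \<times> 'n form1 \<Rightarrow> 'n ten2 \<times> 'n ten2" where
  "torsQ om Ga xi = lsub (wedgeQ om Ga (nablaQ om Ga xi)) (dform xi)"

definition cd2 :: "'n::finite chris \<Rightarrow> 'n \<Rightarrow> 'n ten2 \<Rightarrow> 'n ten2" where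
  "cd2 Ga j c = (\<lambda>m n x. pd j (c m n) x
      - (\<Sum>p\<in>UNIV. complex_of_real (Ga p j m x) * c p n x)
      - (\<Sum>p\<in>UNIV. complex_of_real (Ga p j n x) * c m p x))"

definition ract1 :: "'n::finite bivec \<Rightarrow> 'n chris \<Rightarrow> 'n form1 \<times> 'n form1 \<Rightarrow> 'n fn \<times> 'n fn
    \<Rightarrow> 'n form1 \<times> 'n form1" where
  "ract1 om Ga xi a =
    ((\<lambda>m x. fst a x * fst xi m x),
     (\<lambda>m x. fst a x * snd xi m x + snd a x * fst xi m x
        - (1/2) * (\<Sum>i\<in>UNIV. \<Sum>j\<in>UNIV. complex_of_real (om i j x) * pd i (fst a) x *
                     cd Ga j (fst xi) m x)))"

definition ract2 :: "'n::finite bivec \<Rightarrow> 'n chris \<Rightarrow> 'n ten2 \<times> 'n ten2 \<Rightarrow> 'n fn \<times> 'n fn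
    \<Rightarrow> 'n ten2 \<times> 'n ten2" where
  "ract2 om Ga c a =
    ((\<lambda>m n x. fst a x * fst c m n x),
     (\<lambda>m n x. fst a x * snd c m n x + snd a x * fst c m n x
        - (1/2) * (\<Sum>i\<in>UNIV. \<Sum>j\<in>UNIV. complex_of_real (om i j x) * pd i (fst a) x *
                     cd2 Ga j (fst c) m n x)))"

definition right_module_map :: "(real^'n::finite) set \<Rightarrow> 'n bivec \<Rightarrow> 'n chris
    \<Rightarrow> ('n form1 \<times> 'n form1 \<Rightarrow> 'n ten2 \<times> 'n ten2) \<Rightarrow> bool" where
  "right_module_map U om Ga T \<longleftrightarrow>
     (\<forall>xi a. lsmooth1 U xi \<and> lsmooth0 U a \<longrightarrow>
        (\<forall>x\<in>U. \<forall>m n.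
           fst (T (ract1 om Ga xi a)) m n x = fst (ract2 om Ga (T xi) a) m n x \<and>
           snd (T (ract1 om Ga xi a)) m n x = snd (ract2 om Ga (T xi) a) m n x))"

definition poisson_bivector :: "(real^'n::finite) set \<Rightarrow> 'n bivec \<Rightarrow> bool" where
  "poisson_bivector U om \<longleftrightarrow>
     (\<forall>x\<in>U. \<forall>i j. om i j x = - om j i x) \<and>
     (\<forall>x\<in>U. \<forall>i j k. (\<Sum>l\<in>UNIV. om i l x * pd l (om j k) x + om j l x * pd l (om k i) x
                                   + om k l x * pd l (om i j) x) = 0)"

definition poisson_compatible :: "(real^'n::finite) set \<Rightarrow> 'n bivec \<Rightarrow> 'n chris \<Rightarrow> bool" where
  "poisson_compatible U om Ga \<longleftrightarrow>
     (\<forall>x\<in>U. \<forall>i j m. complex_of_real (pd m (om i j) x)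
        - (\<Sum>k\<in>UNIV. complex_of_real (om k j x) * cd Ga k (dxf i) m x)
        - (\<Sum>k\<in>UNIV. complex_of_real (om i k x) * cd Ga k (dxf j) m x) = 0)"

end

theory Submission
  imports Defs
begin

text \<open>
On the image of q the map wedge_1 is forced: it is additive and prescribed on the products
xi \<otimes>_1 eta, so it alternates the order-0 part and adds the contraction of the order-0 part with
H^{ij} to the order-1 part. For (sigma_Q + id)(eta \<otimes>_1 xi) the order-0 part is symmetric and
disappears. At order 1, the terms quadratic in covariant derivatives form a symmetric tensor
because omega is antisymmetric, and the commutator [nabla_k, nabla_i] eta is tensorial (Ricci
identity), so that its curvature cancels the curvature part of H. What is left besides the torsion
term is the alternation of H in both index pairs; differentiating the compatibility condition
expresses it through second derivatives of omega, and it vanishes by the symmetry of second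
derivatives.

The same computation shows that the quantum torsion fails to be right A_1-linear exactly by
lambda a_{,j} xi_p omega^{ji} T^p_{nk;i} (alternated in k, n); testing with a = x^j and
xi = dx^p isolates each coefficient.
\<close>

lemma pd_has_derivative:
  fixes f :: "real^'n::finite \<Rightarrow> 'b::real_normed_vector"
  assumes "(f has_derivative f') (at x)"
  shows "pd i f x = f' (axis i 1)"
proof -
  have l: "bounded_linear f'" using assms has_derivative_bounded_linear by blast
  have "((\<lambda>t. x + t *\<^sub>R axis i 1) has_derivative (\<lambda>t. t *\<^sub>R axis i 1)) (at 0)"
    by (auto intro!: derivative_eq_intros)
  moreover have "(f has_derivative f') (at (x + 0 *\<^sub>R axis i 1))" using assms by simp
  ultimately have "((\<lambda>t. f (x + t *\<^sub>R axis i 1)) has_derivative (\<lambda>t. f' (t *\<^sub>R axis i 1))) (at 0)"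
    using has_derivative_compose[of "\<lambda>t. x + t *\<^sub>R axis i 1" _ 0 UNIV f f'] by (simp add: o_def)
  hence "((\<lambda>t. f (x + t *\<^sub>R axis i 1)) has_vector_derivative f' (axis i 1)) (at 0)"
    unfolding has_vector_derivative_def using l
    by (simp add: linear.scaleR[OF bounded_linear.linear[OF l]])
  thus ?thesis unfolding pd_def by (rule vector_derivative_at)
qed

lemma pd_const [simp]: "pd i (\<lambda>y. c) x = 0"
  by (rule trans[OF pd_has_derivative[OF has_derivative_const]]) simp

lemma pd_const_fun [simp]: "pd i (\<lambda>y. c) = (\<lambda>y. 0)"
  by (rule ext) (rule pd_const)

lemma pd_add:
  fixes f g :: "real^'n::finite \<Rightarrow> 'b::real_normed_vector"
  assumes "f differentiable (at x)" "g differentiable (at x)"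
  shows "pd i (\<lambda>y. f y + g y) x = pd i f x + pd i g x"
proof -
  obtain f' g' where f: "(f has_derivative f') (at x)" and g: "(g has_derivative g') (at x)"
    using assms unfolding differentiable_def by blast
  show ?thesis
    using pd_has_derivative[OF has_derivative_add[OF f g]] pd_has_derivative[OF f] pd_has_derivative[OF g]
    by simp
qed

lemma pd_diff:
  fixes f g :: "real^'n::finite \<Rightarrow> 'b::real_normed_vector"
  assumes "f differentiable (at x)" "g differentiable (at x)"
  shows "pd i (\<lambda>y. f y - g y) x = pd i f x - pd i g x"
proof -
  obtain f' g' where f: "(f has_derivative f') (at x)" and g: "(g has_derivative g') (at x)"
    using assms unfolding differentiable_def by blast
  show ?thesis
    using pd_has_derivative[OF has_derivative_diff[OF f g]] pd_has_derivative[OF f] pd_has_derivative[OF g]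
    by simp
qed

lemma pd_mult:
  fixes f g :: "real^'n::finite \<Rightarrow> 'b::real_normed_algebra"
  assumes "f differentiable (at x)" "g differentiable (at x)"
  shows "pd i (\<lambda>y. f y * g y) x = f x * pd i g x + pd i f x * g x"
proof -
  obtain f' g' where f: "(f has_derivative f') (at x)" and g: "(g has_derivative g') (at x)"
    using assms unfolding differentiable_def by blast
  show ?thesis
    using pd_has_derivative[OF has_derivative_mult[OF f g]] pd_has_derivative[OF f] pd_has_derivative[OF g]
    by simp
qed

lemma pd_of_real:
  fixes f :: "real^'n::finite \<Rightarrow> real"
  assumes "f differentiable (at x)"
  shows "pd i (\<lambda>y. (of_real (f y) :: 'b::real_normed_algebra_1)) x = of_real (pd i f x)"
proof -
  obtain f' where f: "(f has_derivative f') (at x)"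
    using assms unfolding differentiable_def by blast
  show ?thesis using pd_has_derivative[OF has_derivative_of_real[OF f]] pd_has_derivative[OF f]
    by simp
qed

lemma pd_sum:
  fixes f :: "'a \<Rightarrow> real^'n::finite \<Rightarrow> 'b::real_normed_vector"
  assumes "finite A" "\<And>k. k \<in> A \<Longrightarrow> f k differentiable (at x)"
  shows "pd i (\<lambda>y. \<Sum>k\<in>A. f k y) x = (\<Sum>k\<in>A. pd i (f k) x)"
  using assms
proof (induction A rule: finite_induct)
  case empty
  then show ?case by simp
next
  case (insert a A)
  have "(\<lambda>y. \<Sum>k\<in>A. f k y) differentiable (at x)"
    using insert by (intro differentiable_sum) auto
  then show ?case
    using pd_add[of "f a" x "\<lambda>y. \<Sum>k\<in>A. f k y" i] insert by simp
qed

lemma pd_of_real_coord: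
  "pd i (\<lambda>y::real^'n::finite. (of_real (y $ j) :: 'b::real_normed_algebra_1)) x = (if i = j then 1 else 0)"
proof -
  have "((\<lambda>y::real^'n. y $ j) has_derivative (\<lambda>y. y $ j)) (at x)"
    using bounded_linear_vec_nth[of j] bounded_linear_imp_has_derivative by blast
  from pd_has_derivative[OF has_derivative_of_real[OF this], of i] show ?thesis
    by (cases "i = j") (simp_all add: axis_def)
qed

lemma pd_eq_on_open:
  fixes f g :: "real^'n::finite \<Rightarrow> 'b::real_normed_vector"
  assumes "open U" "x \<in> U" "\<And>y. y \<in> U \<Longrightarrow> f y = g y"
  shows "pd i f x = pd i g x"
proof -
  let ?S = "(\<lambda>t::real. x + t *\<^sub>R axis i 1) -` U"
  have S: "open ?S" "0 \<in> ?S"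
    using assms(1,2) by (auto intro!: open_vimage continuous_intros)
  have eq: "f (x + t *\<^sub>R axis i 1) = g (x + t *\<^sub>R axis i 1)" if "t \<in> ?S" for t
    using assms(3) that by simp
  have "((\<lambda>t. f (x + t *\<^sub>R axis i 1)) has_vector_derivative v) (at 0) \<longleftrightarrow>
        ((\<lambda>t. g (x + t *\<^sub>R axis i 1)) has_vector_derivative v) (at 0)" for v
  proof
    assume "((\<lambda>t. f (x + t *\<^sub>R axis i 1)) has_vector_derivative v) (at 0)"
    then show "((\<lambda>t. g (x + t *\<^sub>R axis i 1)) has_vector_derivative v) (at 0)"
      by (rule has_vector_derivative_transform_within_open[OF _ S]) (rule eq)
  next
    assume "((\<lambda>t. g (x + t *\<^sub>R axis i 1)) has_vector_derivative v) (at 0)"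
    then show "((\<lambda>t. f (x + t *\<^sub>R axis i 1)) has_vector_derivative v) (at 0)"
      by (rule has_vector_derivative_transform_within_open[OF _ S]) (rule eq[symmetric])
  qed
  then show ?thesis unfolding pd_def vector_derivative_def by simp
qed

lemma differentiable_eq_on_open:
  fixes f g :: "real^'n::finite \<Rightarrow> 'b::real_normed_vector"
  assumes "open U" "x \<in> U" "\<And>y. y \<in> U \<Longrightarrow> f y = g y" "f differentiable (at x)"
  shows "g differentiable (at x)"
  using assms has_derivative_transform_within_open unfolding differentiable_def by blast

lemma differentiable_of_real:
  fixes f :: "real^'n::finite \<Rightarrow> real"
  assumes "f differentiable (at x)"
  shows "(\<lambda>y. (of_real (f y) :: 'b::real_normed_algebra_1)) differentiable (at x)"
  using assms has_derivative_of_real unfolding differentiable_def by blast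

section \<open>Symmetry of second partial derivatives\<close>

lemma has_derivative_along_line:
  fixes f :: "real^'n::finite \<Rightarrow> 'b::real_normed_vector"
  assumes "(f has_derivative F) (at (c + t *\<^sub>R a))"
  shows "((\<lambda>t. f (c + t *\<^sub>R a)) has_derivative (\<lambda>s. s *\<^sub>R F a)) (at t)"
proof -
  have l: "bounded_linear F" using assms has_derivative_bounded_linear by blast
  have "((\<lambda>t. c + t *\<^sub>R a) has_derivative (\<lambda>s. s *\<^sub>R a)) (at t)"
    by (auto intro!: derivative_eq_intros)
  from has_derivative_compose[OF this assms] show ?thesis
    by (simp add: o_def linear.scaleR[OF bounded_linear.linear[OF l]])
qed

lemma has_derivative_difference_approx:
  fixes g :: "'a::real_normed_vector \<Rightarrow> 'b::real_normed_vector"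
  assumes g: "(g has_derivative L) (at x)" and e: "e > 0"
  obtains d where "d > 0" "\<And>y z. norm (y - x) < d \<Longrightarrow> norm (z - x) < d \<Longrightarrow>
      norm (g y - g z - L (y - z)) \<le> e * (norm (y - x) + norm (z - x))"
proof -
  have lin: "linear L" using g has_derivative_linear by blast
  obtain d where d: "d > 0" "\<And>y. norm (y - x) < d \<Longrightarrow> norm (g y - g x - L (y - x)) \<le> e * norm (y - x)"
    using g e unfolding has_derivative_at_alt by blast
  have "norm (g y - g z - L (y - z)) \<le> e * (norm (y - x) + norm (z - x))"
    if "norm (y - x) < d" "norm (z - x) < d" for y z
  proof -
    have "L (y - z) = L (y - x) - L (z - x)"
      using linear_diff[OF lin, of "y - x" "z - x"] by simp
    hence "g y - g z - L (y - z) = (g y - g x - L (y - x)) - (g z - g x - L (z - x))"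
      by (simp add: algebra_simps)
    hence "norm (g y - g z - L (y - z)) \<le> norm (g y - g x - L (y - x)) + norm (g z - g x - L (z - x))"
      by (metis norm_triangle_ineq4)
    thus ?thesis using d(2)[OF that(1)] d(2)[OF that(2)] by (simp add: distrib_left)
  qed
  with d(1) show ?thesis using that by blast
qed

lemma has_derivative_partial_difference:
  fixes f :: "real^'n::finite \<Rightarrow> 'b::real_normed_vector"
  assumes "f differentiable (at (x + t *\<^sub>R axis i 1 + v))" "f differentiable (at (x + t *\<^sub>R axis i 1))"
  shows "((\<lambda>t. f (x + t *\<^sub>R axis i 1 + v) - f (x + t *\<^sub>R axis i 1) - (t * h) *\<^sub>R c) has_derivative
          (\<lambda>s. s *\<^sub>R (pd i f (x + t *\<^sub>R axis i 1 + v) - pd i f (x + t *\<^sub>R axis i 1) - h *\<^sub>R c))) (at t)"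
proof -
  let ?a = "axis i (1::real) :: real^'n"
  obtain F1 where F1: "(f has_derivative F1) (at (x + v + t *\<^sub>R ?a))"
    using assms(1) unfolding differentiable_def by (auto simp: ac_simps)
  obtain F2 where F2: "(f has_derivative F2) (at (x + t *\<^sub>R ?a))"
    using assms(2) unfolding differentiable_def by auto
  have "((\<lambda>t. f (x + v + t *\<^sub>R ?a) - f (x + t *\<^sub>R ?a) - (t * h) *\<^sub>R c)
          has_derivative (\<lambda>s. s *\<^sub>R F1 ?a - s *\<^sub>R F2 ?a - (s * h) *\<^sub>R c)) (at t)"
    by (intro has_derivative_diff has_derivative_along_line[OF F1] has_derivative_along_line[OF F2])
      (auto intro!: derivative_eq_intros)
  moreover have "pd i f (x + t *\<^sub>R ?a + v) = F1 ?a"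
    using pd_has_derivative[OF F1, of i] by (simp add: ac_simps)
  moreover have "pd i f (x + t *\<^sub>R ?a) = F2 ?a" using pd_has_derivative[OF F2] .
  ultimately show ?thesis by (simp add: ac_simps scaleR_diff_right)
qed

lemma second_difference_approx:
  fixes f :: "real^'n::finite \<Rightarrow> 'b::real_normed_vector"
  assumes U: "open U" "x \<in> U" and fd: "\<And>y. y \<in> U \<Longrightarrow> f differentiable (at y)"
    and L: "(pd i f has_derivative L) (at x)" and e: "e > 0" and nb: "norm b = 1"
  shows "\<exists>d>0. \<forall>h. \<bar>h\<bar> < d \<longrightarrow>
     norm (f (x + h *\<^sub>R axis i 1 + h *\<^sub>R b) - f (x + h *\<^sub>R axis i 1) - f (x + h *\<^sub>R b) + f x
           - (h * h) *\<^sub>R L b) \<le> 3 * e * (h * h)"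
proof -
  let ?a = "axis i (1::real) :: real^'n"
  have lL: "linear L" using L has_derivative_linear by blast
  obtain d1 where d1: "d1 > 0" "\<And>y z. norm (y - x) < d1 \<Longrightarrow> norm (z - x) < d1 \<Longrightarrow>
      norm (pd i f y - pd i f z - L (y - z)) \<le> e * (norm (y - x) + norm (z - x))"
    using has_derivative_difference_approx[OF L e] by blast
  obtain d2 where d2: "d2 > 0" "ball x d2 \<subseteq> U" using U open_contains_ball by blast
  define d where "d = min d1 d2 / 2"
  have norm_le: "norm (t *\<^sub>R ?a + s *\<^sub>R b) \<le> \<bar>t\<bar> + \<bar>s\<bar>" for t s
    using norm_triangle_ineq[of "t *\<^sub>R ?a" "s *\<^sub>R b"] nb by simp
  have "norm (f (x + h *\<^sub>R ?a + h *\<^sub>R b) - f (x + h *\<^sub>R ?a) - f (x + h *\<^sub>R b) + f x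
           - (h * h) *\<^sub>R L b) \<le> 3 * e * (h * h)" if hd: "\<bar>h\<bar> < d" for h
  proof -
    let ?S = "closed_segment 0 h"
    have tS: "\<bar>t\<bar> \<le> \<bar>h\<bar>" if "t \<in> ?S" for t
      using that by (auto simp: closed_segment_eq_real_ivl split: if_splits)
    have inU: "x + t *\<^sub>R ?a + s *\<^sub>R b \<in> U" if "\<bar>t\<bar> \<le> \<bar>h\<bar>" "\<bar>s\<bar> \<le> \<bar>h\<bar>" for t s
    proof -
      have "2 * \<bar>h\<bar> < d2" using hd d_def by simp
      then have "norm (t *\<^sub>R ?a + s *\<^sub>R b) < d2" using norm_le[of t s] that by linarith
      then have "dist (x + (t *\<^sub>R ?a + s *\<^sub>R b)) x < d2" by (simp add: dist_norm)
      then have "x + (t *\<^sub>R ?a + s *\<^sub>R b) \<in> ball x d2" by (simp add: dist_commute)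
      then show ?thesis using d2(2) by (auto simp: add.assoc)
    qed
    define K where "K t = f (x + t *\<^sub>R ?a + h *\<^sub>R b) - f (x + t *\<^sub>R ?a) - (t * h) *\<^sub>R L b" for t
    define K' where "K' t = (\<lambda>s. s *\<^sub>R (pd i f (x + t *\<^sub>R ?a + h *\<^sub>R b) - pd i f (x + t *\<^sub>R ?a) - h *\<^sub>R L b))"
      for t
    have "(K has_derivative K' t) (at t within ?S)" if "t \<in> ?S" for t
    proof -
      have t: "\<bar>t\<bar> \<le> \<bar>h\<bar>" using tS that by blast
      have "(K has_derivative K' t) (at t)"
        unfolding K_def K'_def using fd inU[OF t, of h] inU[OF t, of 0]
        by (intro has_derivative_partial_difference) auto
      thus ?thesis by (rule has_derivative_at_withinI)
    qed
    moreover have "onorm (K' t) \<le> 3 * e * \<bar>h\<bar>" if "t \<in> ?S" for t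
    proof -
      have t: "\<bar>t\<bar> \<le> \<bar>h\<bar>" using tS that by blast
      let ?y1 = "x + t *\<^sub>R ?a + h *\<^sub>R b" and ?y2 = "x + t *\<^sub>R ?a"
      have n1: "norm (?y1 - x) \<le> 2 * \<bar>h\<bar>" using norm_le[of t h] t by (simp add: add.assoc)
      have n2: "norm (?y2 - x) \<le> \<bar>h\<bar>" using t by simp
      have "2 * \<bar>h\<bar> < d1" using hd d_def by simp
      then have y1: "norm (?y1 - x) < d1" and y2: "norm (?y2 - x) < d1" using n1 n2 by linarith+
      have "L (?y1 - ?y2) = h *\<^sub>R L b" using linear.scaleR[OF lL] by simp
      then have "norm (pd i f ?y1 - pd i f ?y2 - h *\<^sub>R L b) \<le> e * (norm (?y1 - x) + norm (?y2 - x))"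
        using d1(2)[OF y1 y2] by simp
      also have "\<dots> \<le> e * (3 * \<bar>h\<bar>)" using n1 n2 e by (intro mult_left_mono) auto
      finally have "norm (pd i f ?y1 - pd i f ?y2 - h *\<^sub>R L b) \<le> 3 * e * \<bar>h\<bar>" by simp
      moreover have "onorm (K' t) = onorm (\<lambda>s::real. s) * norm (pd i f ?y1 - pd i f ?y2 - h *\<^sub>R L b)"
        unfolding K'_def by (rule onorm_scaleR_left) (rule bounded_linear_ident)
      ultimately show ?thesis using onorm_id[where 'a=real] by simp
    qed
    ultimately have "norm (K h - K 0) \<le> 3 * e * \<bar>h\<bar> * norm (h - 0)"
      by (intro differentiable_bound[OF convex_closed_segment]) auto
    moreover have "K h - K 0 = f (x + h *\<^sub>R ?a + h *\<^sub>R b) - f (x + h *\<^sub>R ?a) - f (x + h *\<^sub>R b) + f x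
           - (h * h) *\<^sub>R L b"
      by (simp add: K_def algebra_simps)
    ultimately show ?thesis by (simp add: abs_mult_self_eq mult.assoc)
  qed
  moreover have "d > 0" using d1 d2 d_def by simp
  ultimately show ?thesis by blast
qed

lemma pd_commute:
  fixes f :: "real^'n::finite \<Rightarrow> 'b::real_normed_vector"
  assumes U: "open U" "x \<in> U" and fd: "\<And>y. y \<in> U \<Longrightarrow> f differentiable (at y)"
    and di: "pd i f differentiable (at x)" and dj: "pd j f differentiable (at x)"
  shows "pd j (pd i f) x = pd i (pd j f) x"
proof (rule ccontr)
  assume ne: "pd j (pd i f) x \<noteq> pd i (pd j f) x"
  obtain Li where Li: "(pd i f has_derivative Li) (at x)" using di unfolding differentiable_def by blast
  obtain Lj where Lj: "(pd j f has_derivative Lj) (at x)" using dj unfolding differentiable_def by blast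
  define c where "c = norm (Li (axis j 1) - Lj (axis i 1))"
  have c: "c > 0"
    using ne pd_has_derivative[OF Li] pd_has_derivative[OF Lj] c_def by simp
  define e where "e = c / 8"
  have e: "e > 0" using c e_def by simp
  obtain d1 where d1: "d1 > 0" "\<And>h. \<bar>h\<bar> < d1 \<Longrightarrow>
     norm (f (x + h *\<^sub>R axis i 1 + h *\<^sub>R axis j 1) - f (x + h *\<^sub>R axis i 1) - f (x + h *\<^sub>R axis j 1) + f x
           - (h * h) *\<^sub>R Li (axis j 1)) \<le> 3 * e * (h * h)"
    using second_difference_approx[OF U fd Li e, of "axis j 1"] by auto
  obtain d2 where d2: "d2 > 0" "\<And>h. \<bar>h\<bar> < d2 \<Longrightarrow>
     norm (f (x + h *\<^sub>R axis j 1 + h *\<^sub>R axis i 1) - f (x + h *\<^sub>R axis j 1) - f (x + h *\<^sub>R axis i 1) + f x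
           - (h * h) *\<^sub>R Lj (axis i 1)) \<le> 3 * e * (h * h)"
    using second_difference_approx[OF U fd Lj e, of "axis i 1"] by auto
  define h where "h = min d1 d2 / 2"
  have hp: "h > 0" "\<bar>h\<bar> < d1" "\<bar>h\<bar> < d2" using d1 d2 h_def by auto
  define P where "P = f (x + h *\<^sub>R axis i 1 + h *\<^sub>R axis j 1) - f (x + h *\<^sub>R axis i 1)
                      - f (x + h *\<^sub>R axis j 1) + f x"
  have b1: "norm (P - (h * h) *\<^sub>R Li (axis j 1)) \<le> 3 * e * (h * h)"
    using d1(2)[OF hp(2)] unfolding P_def .
  have b2: "norm (P - (h * h) *\<^sub>R Lj (axis i 1)) \<le> 3 * e * (h * h)"
    using d2(2)[OF hp(3)] unfolding P_def by (simp add: algebra_simps)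
  have "(h * h) *\<^sub>R (Li (axis j 1) - Lj (axis i 1)) =
        (P - (h * h) *\<^sub>R Lj (axis i 1)) - (P - (h * h) *\<^sub>R Li (axis j 1))"
    by (simp add: algebra_simps)
  hence "norm ((h * h) *\<^sub>R (Li (axis j 1) - Lj (axis i 1))) \<le> 6 * e * (h * h)"
    using norm_triangle_ineq4[of "P - (h * h) *\<^sub>R Lj (axis i 1)" "P - (h * h) *\<^sub>R Li (axis j 1)"] b1 b2
    by simp
  hence "(h * h) * c \<le> (h * h) * (6 * e)" by (simp add: c_def mult_ac)
  hence "c \<le> 6 * e" using hp(1) by simp
  thus False using c e_def by simp
qed

section \<open>Smooth functions\<close>

lemma pds_append: "pds (is @ [i]) f = pds is (pd i f)"
  by (induction "is") auto

lemma smooth_on_differentiable: "smooth_on U f \<Longrightarrow> x \<in> U \<Longrightarrow> f differentiable (at x)"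
  unfolding smooth_on_def by (metis pds.simps(1))

lemma smooth_on_pd: "smooth_on U f \<Longrightarrow> smooth_on U (pd i f)"
  unfolding smooth_on_def by (metis pds_append)

lemma pds_const: "pds is (\<lambda>y. c) = (if is = [] then (\<lambda>y. c) else (\<lambda>y. 0))"
  by (induction "is") auto

lemma smooth_on_const: "smooth_on U (\<lambda>y. c)"
  unfolding smooth_on_def pds_const by auto

lemma smooth_on_of_real_coord: "smooth_on U (\<lambda>y::real^'n::finite. (of_real (y $ j) :: complex))"
proof -
  have "pds is (\<lambda>y::real^'n. (of_real (y $ j) :: complex)) differentiable (at x)" for "is" x
  proof (cases "is" rule: rev_cases)
    case Nil
    have "(\<lambda>y::real^'n. y $ j) differentiable (at x)"
      using bounded_linear_vec_nth[of j] bounded_linear_imp_differentiable by blast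
    then show ?thesis using Nil differentiable_of_real by auto
  next
    case (snoc js i)
    have "pd i (\<lambda>y::real^'n. (of_real (y $ j) :: complex)) = (\<lambda>y. if i = j then 1 else 0)"
      by (intro ext) (rule pd_of_real_coord)
    then show ?thesis unfolding snoc pds_append by (simp add: pds_const)
  qed
  thus ?thesis unfolding smooth_on_def by blast
qed

lemma smooth_onI_pd_closed:
  assumes U: "open U" and "S f"
    and diff: "\<And>g x. S g \<Longrightarrow> x \<in> U \<Longrightarrow> g differentiable (at x)"
    and pd_closed: "\<And>g i. S g \<Longrightarrow> \<exists>h. S h \<and> (\<forall>x\<in>U. pd i g x = h x)"
  shows "smooth_on U f"
proof -
  have "\<exists>h. S h \<and> (\<forall>x\<in>U. pds is f x = h x)" for "is"
  proof (induction "is")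
    case Nil
    show ?case using \<open>S f\<close> by auto
  next
    case (Cons i "is")
    then obtain h where h: "S h" "\<forall>x\<in>U. pds is f x = h x" by blast
    obtain h' where h': "S h'" "\<forall>x\<in>U. pd i h x = h' x" using pd_closed[OF h(1)] by blast
    have "\<forall>x\<in>U. pds (i # is) f x = h' x"
      using pd_eq_on_open[OF U _ h(2)[rule_format]] h'(2) by simp
    with h'(1) show ?case by blast
  qed
  then show ?thesis
    unfolding smooth_on_def using diff differentiable_eq_on_open[OF U] by metis
qed

definition sum_products :: "((real^'n::finite \<Rightarrow> 'b::real_normed_algebra) \<times> (real^'n \<Rightarrow> 'b)) list
    \<Rightarrow> real^'n \<Rightarrow> 'b" where
  "sum_products ps y = (\<Sum>p\<leftarrow>ps. fst p y * snd p y)"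

definition pd_products :: "'n::finite \<Rightarrow> ((real^'n \<Rightarrow> 'b::real_normed_algebra) \<times> (real^'n \<Rightarrow> 'b)) list
    \<Rightarrow> ((real^'n \<Rightarrow> 'b) \<times> (real^'n \<Rightarrow> 'b)) list" where
  "pd_products i ps = concat (map (\<lambda>p. [(fst p, pd i (snd p)), (pd i (fst p), snd p)]) ps)"

lemma differentiable_sum_products:
  assumes "\<forall>p\<in>set ps. fst p differentiable (at x) \<and> snd p differentiable (at x)"
  shows "sum_products ps differentiable (at x)"
  using assms
proof (induction ps)
  case Nil
  then show ?case by (simp add: sum_products_def)
next
  case (Cons p ps)
  have "sum_products (p # ps) = (\<lambda>y. fst p y * snd p y + sum_products ps y)"
    by (auto simp: sum_products_def)
  then show ?case using Cons by (auto intro!: differentiable_add differentiable_mult)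
qed

lemma pd_sum_products:
  assumes "\<forall>p\<in>set ps. fst p differentiable (at x) \<and> snd p differentiable (at x)"
  shows "pd i (sum_products ps) x = sum_products (pd_products i ps) x"
  using assms
proof (induction ps)
  case Nil
  then show ?case by (simp add: sum_products_def pd_products_def)
next
  case (Cons p ps)
  have "sum_products (p # ps) = (\<lambda>y. fst p y * snd p y + sum_products ps y)"
    by (auto simp: sum_products_def)
  moreover have "(\<lambda>y. fst p y * snd p y) differentiable (at x)" using Cons by auto
  moreover have "sum_products ps differentiable (at x)"
    using Cons differentiable_sum_products by auto
  ultimately have "pd i (sum_products (p # ps)) x = pd i (\<lambda>y. fst p y * snd p y) x + pd i (sum_products ps) x"
    by (simp add: pd_add)
  also have "\<dots> = fst p x * pd i (snd p) x + pd i (fst p) x * snd p x + sum_products (pd_products i ps) x"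
    using Cons by (simp add: pd_mult)
  also have "\<dots> = sum_products (pd_products i (p # ps)) x"
    by (simp add: sum_products_def pd_products_def)
  finally show ?case .
qed

lemma smooth_on_sum_products:
  assumes U: "open U" and ps: "\<forall>p\<in>set ps. smooth_on U (fst p) \<and> smooth_on U (snd p)"
  shows "smooth_on U (sum_products ps)"
proof (rule smooth_onI_pd_closed[OF U,
      where S = "\<lambda>g. \<exists>qs. (\<forall>p\<in>set qs. smooth_on U (fst p) \<and> smooth_on U (snd p)) \<and> g = sum_products qs"])
  show "\<exists>qs. (\<forall>p\<in>set qs. smooth_on U (fst p) \<and> smooth_on U (snd p)) \<and> sum_products ps = sum_products qs"
    using ps by blast
next
  fix g x
  assume "\<exists>qs. (\<forall>p\<in>set qs. smooth_on U (fst p) \<and> smooth_on U (snd p)) \<and> g = sum_products qs" "x \<in> U"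
  then show "g differentiable (at x)"
    by (auto intro!: differentiable_sum_products smooth_on_differentiable)
next
  fix g i
  assume "\<exists>qs. (\<forall>p\<in>set qs. smooth_on U (fst p) \<and> smooth_on U (snd p)) \<and> g = sum_products qs"
  then obtain qs where qs: "\<forall>p\<in>set qs. smooth_on U (fst p) \<and> smooth_on U (snd p)" "g = sum_products qs"
    by blast
  have "\<forall>p\<in>set (pd_products i qs). smooth_on U (fst p) \<and> smooth_on U (snd p)"
    using qs(1) by (auto simp: pd_products_def smooth_on_pd)
  moreover have "\<forall>x\<in>U. pd i g x = sum_products (pd_products i qs) x"
    using qs by (auto intro!: pd_sum_products smooth_on_differentiable)
  ultimately show "\<exists>h. (\<exists>qs. (\<forall>p\<in>set qs. smooth_on U (fst p) \<and> smooth_on U (snd p)) \<and> h = sum_products qs)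
      \<and> (\<forall>x\<in>U. pd i g x = h x)"
    by blast
qed

lemma smooth_on_mult:
  fixes f g :: "real^'n::finite \<Rightarrow> 'b::real_normed_algebra"
  assumes "open U" "smooth_on U f" "smooth_on U g"
  shows "smooth_on U (\<lambda>y. f y * g y)"
proof -
  have "(\<lambda>y. f y * g y) = sum_products [(f, g)]" by (simp add: sum_products_def fun_eq_iff)
  with assms smooth_on_sum_products[of U "[(f, g)]"] show ?thesis by simp
qed

lemma smooth_on_diff:
  fixes f g :: "real^'n::finite \<Rightarrow> 'b::real_normed_algebra_1"
  assumes "open U" "smooth_on U f" "smooth_on U g"
  shows "smooth_on U (\<lambda>y. f y - g y)"
proof -
  have "(\<lambda>y. f y - g y) = sum_products [(f, \<lambda>_. 1), (\<lambda>_. - 1, g)]" by (simp add: sum_products_def fun_eq_iff)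
  with assms smooth_on_sum_products[of U "[(f, \<lambda>_. 1), (\<lambda>_. - 1, g)]"] show ?thesis
    by (simp add: smooth_on_const)
qed

lemma smooth_on_sum:
  fixes f :: "'a \<Rightarrow> real^'n::finite \<Rightarrow> 'b::real_normed_algebra_1"
  assumes U: "open U" and "finite A" and "\<And>a. a \<in> A \<Longrightarrow> smooth_on U (f a)"
  shows "smooth_on U (\<lambda>y. \<Sum>a\<in>A. f a y)"
  using assms(2,3)
proof (induction A rule: finite_induct)
  case empty
  then show ?case by (simp add: smooth_on_const)
next
  case (insert a A)
  have "(\<lambda>y. f a y + (\<Sum>a\<in>A. f a y)) = sum_products [(f a, \<lambda>_. 1), (\<lambda>_. 1, \<lambda>y. \<Sum>a\<in>A. f a y)]"
    by (simp add: sum_products_def fun_eq_iff)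
  with insert smooth_on_sum_products[OF U, of "[(f a, \<lambda>_. 1), (\<lambda>_. 1, \<lambda>y. \<Sum>a\<in>A. f a y)]"]
  show ?case by (simp add: smooth_on_const)
qed

lemma smooth_on_of_real:
  fixes f :: "real^'n::finite \<Rightarrow> real"
  assumes U: "open U" and f: "smooth_on U f"
  shows "smooth_on U (\<lambda>y. (of_real (f y) :: 'b::real_normed_algebra_1))"
proof (rule smooth_onI_pd_closed[OF U, where S = "\<lambda>g. \<exists>h. smooth_on U h \<and> g = (\<lambda>y. of_real (h y))"])
  show "\<exists>h. smooth_on U h \<and> (\<lambda>y. of_real (f y) :: 'b) = (\<lambda>y. of_real (h y))" using f by blast
next
  fix g :: "real^'n \<Rightarrow> 'b" and x
  assume "\<exists>h. smooth_on U h \<and> g = (\<lambda>y. of_real (h y))" "x \<in> U"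
  then show "g differentiable (at x)"
    by (auto intro: differentiable_of_real smooth_on_differentiable)
next
  fix g :: "real^'n \<Rightarrow> 'b" and i
  assume "\<exists>h. smooth_on U h \<and> g = (\<lambda>y. of_real (h y))"
  then obtain h where h: "smooth_on U h" "g = (\<lambda>y. of_real (h y))" by blast
  have "\<forall>x\<in>U. pd i g x = of_real (pd i h x)"
    using h by (auto intro: pd_of_real smooth_on_differentiable)
  with h(1) show "\<exists>h'. (\<exists>h. smooth_on U h \<and> h' = (\<lambda>y. of_real (h y))) \<and> (\<forall>x\<in>U. pd i g x = h' x)"
    by (blast intro: smooth_on_pd)
qed

lemma sum_swap3:
  "(\<Sum>i\<in>UNIV. \<Sum>j\<in>UNIV. \<Sum>p\<in>UNIV. f i j p)
   = (\<Sum>j\<in>UNIV. \<Sum>p\<in>UNIV. \<Sum>i\<in>UNIV. (f i j p :: 'a::comm_monoid_add))"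
  by (rule trans[OF sum.swap], rule sum.cong[OF refl], rule sum.swap)

lemma sum_swap_inner:
  "(\<Sum>i\<in>UNIV. \<Sum>j\<in>UNIV. \<Sum>p\<in>UNIV. f i j p)
   = (\<Sum>i\<in>UNIV. \<Sum>p\<in>UNIV. \<Sum>j\<in>UNIV. (f i j p :: 'a::comm_monoid_add))"
  by (rule sum.cong[OF refl], rule sum.swap)

lemma sum_mult_inner_sum:
  "(\<Sum>i\<in>UNIV. \<Sum>j\<in>UNIV. c i j * (\<Sum>t\<in>UNIV. f i j t))
   = (\<Sum>i\<in>UNIV. \<Sum>t\<in>UNIV. \<Sum>j\<in>UNIV. (c i j * f i j t :: 'a::semiring_0))"
  unfolding sum_distrib_left by (rule sum_swap_inner)

lemma double_sum_eq_symmetrized: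
  fixes F G :: "'n::finite \<Rightarrow> 'n \<Rightarrow> complex"
  assumes "\<And>x y. F x y + F y x = G x y + G y x"
  shows "(\<Sum>x\<in>UNIV. \<Sum>y\<in>UNIV. F x y) = (\<Sum>x\<in>UNIV. \<Sum>y\<in>UNIV. G x y)"
proof -
  have "(\<Sum>x\<in>UNIV. \<Sum>y\<in>UNIV. F y x) = (\<Sum>x\<in>UNIV. \<Sum>y\<in>UNIV. F x y)" by (rule sum.swap)
  moreover have "(\<Sum>x\<in>UNIV. \<Sum>y\<in>UNIV. G y x) = (\<Sum>x\<in>UNIV. \<Sum>y\<in>UNIV. G x y)" by (rule sum.swap)
  moreover have "(\<Sum>x\<in>UNIV. \<Sum>y\<in>UNIV. F x y + F y x) = (\<Sum>x\<in>UNIV. \<Sum>y\<in>UNIV. G x y + G y x)"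
    using assms by simp
  ultimately show ?thesis by (simp add: sum.distrib)
qed

definition symsum :: "('n::finite \<Rightarrow> 'n \<Rightarrow> complex) \<Rightarrow> complex" where
  "symsum f = (\<Sum>x\<in>UNIV. \<Sum>y\<in>UNIV. f x y + f y x) / 2"

text \<open>Rewriting every double sum into its symmetrization gives the simplifier a normal form in
which sums differing by an exchange of the two indices cancel.\<close>

lemma double_sum_eq_symsum: "(\<Sum>x\<in>UNIV. \<Sum>y\<in>UNIV. f x y) = symsum (\<lambda>x y. f x y)"
proof -
  have "(\<Sum>x\<in>UNIV. \<Sum>y\<in>UNIV. f y x) = (\<Sum>x\<in>UNIV. \<Sum>y\<in>UNIV. f x y)"
    by (rule sum.swap)
  thus ?thesis unfolding symsum_def by (simp add: sum.distrib)
qed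

text \<open>Writing an antisymmetric array as u - u^T makes its antisymmetry visible to the
simplifier.\<close>

lemma antisym_eq_diff_transpose:
  fixes w :: "'a \<Rightarrow> 'a \<Rightarrow> 'b::field_char_0"
  assumes "\<And>i j. w i j = - w j i"
  shows "\<exists>u. w = (\<lambda>i j. u i j - u j i)"
proof
  show "w = (\<lambda>i j. w i j / 2 - w j i / 2)"
  proof (intro ext)
    fix i j
    show "w i j = w i j / 2 - w j i / 2" using assms[of j i] by simp
  qed
qed

text \<open>Curvature, covariant derivative of the torsion, H^{ij} and the first two derivatives of a
compatible omega, as polynomials in the values at a point of omega (w), of the Christoffel symbols
(G) and of their first derivatives (dG l a b c standing for the l-th partial of Gamma^a_{bc}).\<close>

definition curv_pt :: "('n::finite \<Rightarrow> 'n \<Rightarrow> 'n \<Rightarrow> complex) \<Rightarrow> ('n \<Rightarrow> 'n \<Rightarrow> 'n \<Rightarrow> 'n \<Rightarrow> complex)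
    \<Rightarrow> 'n \<Rightarrow> 'n \<Rightarrow> 'n \<Rightarrow> 'n \<Rightarrow> complex" where
  "curv_pt G dG k m i j = dG i k j m - dG j k i m
     - (\<Sum>q\<in>UNIV. G q i m * G k j q) + (\<Sum>q\<in>UNIV. G q j m * G k i q)"

definition tors_cov_pt :: "('n::finite \<Rightarrow> 'n \<Rightarrow> 'n \<Rightarrow> complex) \<Rightarrow> ('n \<Rightarrow> 'n \<Rightarrow> 'n \<Rightarrow> 'n \<Rightarrow> complex)
    \<Rightarrow> 'n \<Rightarrow> 'n \<Rightarrow> 'n \<Rightarrow> 'n \<Rightarrow> complex" where
  "tors_cov_pt G dG p n k i = dG i p n k - dG i p k n
     + (\<Sum>s\<in>UNIV. G p i s * (G s n k - G s k n))
     - (\<Sum>s\<in>UNIV. G s i n * (G p s k - G p k s))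
     - (\<Sum>s\<in>UNIV. G s i k * (G p n s - G p s n))"

definition H_pt :: "('n::finite \<Rightarrow> 'n \<Rightarrow> complex) \<Rightarrow> ('n \<Rightarrow> 'n \<Rightarrow> 'n \<Rightarrow> complex)
    \<Rightarrow> ('n \<Rightarrow> 'n \<Rightarrow> 'n \<Rightarrow> 'n \<Rightarrow> complex) \<Rightarrow> 'n \<Rightarrow> 'n \<Rightarrow> 'n \<Rightarrow> 'n \<Rightarrow> complex" where
  "H_pt w G dG i j m n =
     1/4 * (\<Sum>s\<in>UNIV. w i s * (tors_cov_pt G dG j n m s - 2 * curv_pt G dG j n m s))"

definition pd_bivec_pt :: "('n::finite \<Rightarrow> 'n \<Rightarrow> complex) \<Rightarrow> ('n \<Rightarrow> 'n \<Rightarrow> 'n \<Rightarrow> complex)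
    \<Rightarrow> 'n \<Rightarrow> 'n \<Rightarrow> 'n \<Rightarrow> complex" where
  "pd_bivec_pt w G l i j = - (\<Sum>k\<in>UNIV. w k j * G i k l + w i k * G j k l)"

definition pd2_bivec_pt :: "('n::finite \<Rightarrow> 'n \<Rightarrow> complex) \<Rightarrow> ('n \<Rightarrow> 'n \<Rightarrow> 'n \<Rightarrow> complex)
    \<Rightarrow> ('n \<Rightarrow> 'n \<Rightarrow> 'n \<Rightarrow> 'n \<Rightarrow> complex) \<Rightarrow> 'n \<Rightarrow> 'n \<Rightarrow> 'n \<Rightarrow> 'n \<Rightarrow> complex" where
  "pd2_bivec_pt w G dG n m i j =
     - (\<Sum>k\<in>UNIV. pd_bivec_pt w G n k j * G i k m + w k j * dG n i k m
                  + pd_bivec_pt w G n i k * G j k m + w i k * dG n j k m)"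

lemma tors_cov_pt_antisym: "tors_cov_pt G dG p n k i = - tors_cov_pt G dG p k n i"
  unfolding tors_cov_pt_def by (simp add: sum_distrib_left sum_subtractf sum.distrib algebra_simps)

lemma commutator_pt:
  fixes G :: "'n::finite \<Rightarrow> 'n \<Rightarrow> 'n \<Rightarrow> complex" and dG :: "'n \<Rightarrow> 'n \<Rightarrow> 'n \<Rightarrow> 'n \<Rightarrow> complex"
    and B :: "'n \<Rightarrow> complex" and dB :: "'n \<Rightarrow> 'n \<Rightarrow> complex"
  shows "(dd - (\<Sum>i\<in>UNIV. G i j b * dB k i + dG k i j b * B i)
            - (\<Sum>q\<in>UNIV. G q k b * (dB j q - (\<Sum>i\<in>UNIV. G i j q * B i))))
       - (dd - (\<Sum>i\<in>UNIV. G i k b * dB j i + dG j i k b * B i)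
            - (\<Sum>q\<in>UNIV. G q j b * (dB k q - (\<Sum>i\<in>UNIV. G i k q * B i))))
       = - (\<Sum>p\<in>UNIV. B p * curv_pt G dG p b k j)"
  unfolding curv_pt_def
  apply (simp add: sum_distrib_left sum_distrib_right sum_subtractf sum.distrib algebra_simps sum_negf)
  apply (simp only: sum.distrib[symmetric])
  apply (rule double_sum_eq_symmetrized)
  apply (simp add: algebra_simps)
  done

lemma H_pt_alternation:
  fixes u :: "'n::finite \<Rightarrow> 'n \<Rightarrow> complex"
  defines "w \<equiv> \<lambda>i j. u i j - u j i"
  shows "H_pt w G dG a b m n - H_pt w G dG b a m n - H_pt w G dG a b n m + H_pt w G dG b a n m
         = (pd2_bivec_pt w G dG m n a b - pd2_bivec_pt w G dG n m a b) / 2"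
  unfolding H_pt_def pd2_bivec_pt_def pd_bivec_pt_def curv_pt_def tors_cov_pt_def w_def
  apply (simp add: sum_distrib_left sum_distrib_right sum_subtractf sum.distrib algebra_simps sum_negf)
  apply (simp only: double_sum_eq_symsum)
  apply (simp add: symsum_def sum_distrib_left sum_distrib_right sum_subtractf sum.distrib algebra_simps sum_negf)
  done

lemma gradient_terms_symmetric_pt:
  fixes u :: "'n::finite \<Rightarrow> 'n \<Rightarrow> complex" and cX cY :: "'n \<Rightarrow> 'n \<Rightarrow> complex"
  defines "w \<equiv> \<lambda>i j. u i j - u j i"
  defines "Gr \<equiv> \<lambda>m n. 1/2 * (\<Sum>i\<in>UNIV. \<Sum>j\<in>UNIV. w i j * (cX i m * cY j n))
      + (\<Sum>i\<in>UNIV. \<Sum>j\<in>UNIV. w i j * (cX j m * cY i n))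
      + 1/2 * (\<Sum>i\<in>UNIV. \<Sum>j\<in>UNIV. w i j * (cY i m * cX j n))"
  shows "Gr k n = Gr n k"
  unfolding Gr_def w_def
  apply (simp add: sum_distrib_left sum_distrib_right sum_subtractf sum.distrib algebra_simps sum_negf)
  apply (simp only: sum.distrib[symmetric])
  apply (rule double_sum_eq_symmetrized)
  apply (simp add: algebra_simps)
  done

lemma curvature_terms_cancel_pt:
  fixes w :: "'n::finite \<Rightarrow> 'n \<Rightarrow> complex" and X Y :: "'n \<Rightarrow> complex"
    and C T H :: "'n \<Rightarrow> 'n \<Rightarrow> 'n \<Rightarrow> 'n \<Rightarrow> complex"
  assumes anti: "\<And>i j. w i j = - w j i"
    and H_alt: "\<And>a b m n. H a b m n - H b a m n - H a b n m + H b a n m = 0"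
    and H_def: "\<And>i j m n. H i j m n = 1/4 * (\<Sum>s\<in>UNIV. w i s * (T j n m s - 2 * C j n m s))"
  defines "Q \<equiv> \<lambda>m n. (\<Sum>i\<in>UNIV. \<Sum>j\<in>UNIV. w i j * X j * (- (\<Sum>p\<in>UNIV. Y p * C p n m i)))
                  + (\<Sum>i\<in>UNIV. \<Sum>j\<in>UNIV. H i j m n * (X i * Y j + Y i * X j))"
  shows "Q k n - Q n k = 1/2 * (\<Sum>j\<in>UNIV. \<Sum>p\<in>UNIV. \<Sum>i\<in>UNIV. X j * Y p * (w j i * T p n k i))
                       - 1/2 * (\<Sum>j\<in>UNIV. \<Sum>p\<in>UNIV. \<Sum>i\<in>UNIV. X j * Y p * (w j i * T p k n i))"
proof -
  obtain u where wu: "w = (\<lambda>i j. u i j - u j i)"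
    using antisym_eq_diff_transpose[of w] anti by blast
  define E where "E m n a b = H a b m n + H b a m n - (\<Sum>s\<in>UNIV. w s a * C b n m s)" for m n a b
  have Q_eq: "Q m n = (\<Sum>a\<in>UNIV. \<Sum>b\<in>UNIV. X a * Y b * E m n a b)" for m n
  proof -
    have "(\<Sum>i\<in>UNIV. \<Sum>j\<in>UNIV. w i j * X j * (- (\<Sum>p\<in>UNIV. Y p * C p n m i)))
        = (\<Sum>i\<in>UNIV. \<Sum>j\<in>UNIV. \<Sum>p\<in>UNIV. X j * Y p * - (w i j * C p n m i))"
      by (simp add: sum_distrib_left sum_negf algebra_simps)
    also have "\<dots> = (\<Sum>j\<in>UNIV. \<Sum>p\<in>UNIV. \<Sum>i\<in>UNIV. X j * Y p * - (w i j * C p n m i))"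
      by (rule sum_swap3)
    finally have curv: "(\<Sum>i\<in>UNIV. \<Sum>j\<in>UNIV. w i j * X j * (- (\<Sum>p\<in>UNIV. Y p * C p n m i)))
        = (\<Sum>a\<in>UNIV. \<Sum>b\<in>UNIV. X a * Y b * - (\<Sum>s\<in>UNIV. w s a * C b n m s))"
      by (simp add: sum_distrib_left sum_negf)
    have "(\<Sum>i\<in>UNIV. \<Sum>j\<in>UNIV. H i j m n * (Y i * X j)) = (\<Sum>j\<in>UNIV. \<Sum>i\<in>UNIV. H i j m n * (Y i * X j))"
      by (rule sum.swap)
    hence "(\<Sum>i\<in>UNIV. \<Sum>j\<in>UNIV. H i j m n * (X i * Y j + Y i * X j))
        = (\<Sum>a\<in>UNIV. \<Sum>b\<in>UNIV. X a * Y b * (H a b m n + H b a m n))"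
      by (simp add: sum.distrib algebra_simps)
    with curv show ?thesis
      unfolding Q_def E_def by (simp add: sum.distrib[symmetric] algebra_simps)
  qed
  have E_alt: "E k n a b - E n k a b = 1/2 * (\<Sum>s\<in>UNIV. w a s * (T b n k s - T b k n s))" for a b
  proof -
    have "H b a k n - H b a n k = H a b k n - H a b n k"
      using H_alt[of a b k n] by (simp add: algebra_simps)
    hence "E k n a b - E n k a b
        = 2 * (H a b k n - H a b n k) - (\<Sum>s\<in>UNIV. w s a * (C b n k s - C b k n s))"
      unfolding E_def by (simp add: sum_subtractf algebra_simps)
    also have "\<dots> = 1/2 * (\<Sum>s\<in>UNIV. w a s * (T b n k s - T b k n s))"
      unfolding H_def wu by (simp add: sum_distrib_left sum_subtractf sum.distrib algebra_simps)
    finally show ?thesis .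
  qed
  have "Q k n - Q n k = (\<Sum>a\<in>UNIV. \<Sum>b\<in>UNIV. X a * Y b * (E k n a b - E n k a b))"
    unfolding Q_eq by (simp add: sum_subtractf right_diff_distrib)
  thus ?thesis
    unfolding E_alt by (simp add: sum_distrib_left sum_subtractf algebra_simps)
qed

text \<open>The order-1 part of (sigma_Q + id)(eta \<otimes>_1 xi) after applying wedge_1, before alternation:
X, Xb, Y, Yb are the orders 0, 1 of xi and eta, cX, cY the covariant derivatives of their order-0
parts.\<close>

lemma sigma_plus_id_order1_pt:
  fixes w :: "'n::finite \<Rightarrow> 'n \<Rightarrow> complex" and X Xb Y Yb :: "'n \<Rightarrow> complex"
    and cX cY :: "'n \<Rightarrow> 'n \<Rightarrow> complex" and C T H :: "'n \<Rightarrow> 'n \<Rightarrow> 'n \<Rightarrow> 'n \<Rightarrow> complex"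
  assumes anti: "\<And>i j. w i j = - w j i"
    and H_alt: "\<And>a b m n. H a b m n - H b a m n - H a b n m + H b a n m = 0"
    and H_def: "\<And>i j m n. H i j m n = 1/4 * (\<Sum>s\<in>UNIV. w i s * (T j n m s - 2 * C j n m s))"
  defines "L \<equiv> \<lambda>m n. (X m * Yb n + Xb m * Y n + 1/2 * (\<Sum>i\<in>UNIV. \<Sum>j\<in>UNIV. w i j * (cX i m * cY j n)))
      + ((\<Sum>i\<in>UNIV. \<Sum>j\<in>UNIV. w i j * (cX j m * cY i n))
         + (\<Sum>i\<in>UNIV. \<Sum>j\<in>UNIV. w i j * X j * (- (\<Sum>p\<in>UNIV. Y p * C p n m i))))
      + (Y m * Xb n + Yb m * X n + 1/2 * (\<Sum>i\<in>UNIV. \<Sum>j\<in>UNIV. w i j * (cY i m * cX j n)))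
      + (\<Sum>i\<in>UNIV. \<Sum>j\<in>UNIV. H i j m n * (X i * Y j + Y i * X j))"
  shows "L k n - L n k = 1/2 * (\<Sum>j\<in>UNIV. \<Sum>p\<in>UNIV. \<Sum>i\<in>UNIV. X j * Y p * (w j i * T p n k i))
          - 1/2 * (\<Sum>j\<in>UNIV. \<Sum>p\<in>UNIV. \<Sum>i\<in>UNIV. X j * Y p * (w j i * T p k n i))"
proof -
  obtain u where wu: "w = (\<lambda>i j. u i j - u j i)"
    using antisym_eq_diff_transpose[of w] anti by blast
  define Gr where "Gr m n = 1/2 * (\<Sum>i\<in>UNIV. \<Sum>j\<in>UNIV. w i j * (cX i m * cY j n))
      + (\<Sum>i\<in>UNIV. \<Sum>j\<in>UNIV. w i j * (cX j m * cY i n))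
      + 1/2 * (\<Sum>i\<in>UNIV. \<Sum>j\<in>UNIV. w i j * (cY i m * cX j n))" for m n
  define Q where "Q m n = (\<Sum>i\<in>UNIV. \<Sum>j\<in>UNIV. w i j * X j * (- (\<Sum>p\<in>UNIV. Y p * C p n m i)))
      + (\<Sum>i\<in>UNIV. \<Sum>j\<in>UNIV. H i j m n * (X i * Y j + Y i * X j))" for m n
  have "L m n = Gr m n + Q m n + (X m * Yb n + Xb m * Y n + Y m * Xb n + Yb m * X n)" for m n
    unfolding L_def Gr_def Q_def by (simp add: algebra_simps)
  moreover have "Gr k n = Gr n k"
    unfolding Gr_def wu by (rule gradient_terms_symmetric_pt)
  moreover have "Q k n - Q n k = 1/2 * (\<Sum>j\<in>UNIV. \<Sum>p\<in>UNIV. \<Sum>i\<in>UNIV. X j * Y p * (w j i * T p n k i))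
          - 1/2 * (\<Sum>j\<in>UNIV. \<Sum>p\<in>UNIV. \<Sum>i\<in>UNIV. X j * Y p * (w j i * T p k n i))"
    unfolding Q_def using anti H_alt H_def by (rule curvature_terms_cancel_pt)
  ultimately show ?thesis by (simp add: algebra_simps)
qed

section \<open>Covariant derivatives in coordinates\<close>

lemma cd_dxf: "cd Ga j (dxf k) = (\<lambda>m y. - complex_of_real (Ga k j m y))"
proof (intro ext)
  fix m y
  have "(\<Sum>i\<in>UNIV. complex_of_real (Ga i j m y) * (if i = k then 1 else 0)) = complex_of_real (Ga k j m y)"
    by (simp add: if_distrib cong: if_cong)
  then show "cd Ga j (dxf k) m y = - complex_of_real (Ga k j m y)"
    unfolding cd_def dxf_def by simp
qed

lemma cd_cd:
  fixes Ga :: "'n::finite chris" and \<beta> :: "'n form1"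
  assumes db: "\<And>p. \<beta> p differentiable (at x)" and ddb: "pd j (\<beta> b) differentiable (at x)"
    and dG: "\<And>i. Ga i j b differentiable (at x)"
  shows "cd Ga k (cd Ga j \<beta>) b x = pd k (pd j (\<beta> b)) x
     - (\<Sum>i\<in>UNIV. complex_of_real (Ga i j b x) * pd k (\<beta> i) x + complex_of_real (pd k (Ga i j b) x) * \<beta> i x)
     - (\<Sum>q\<in>UNIV. complex_of_real (Ga q k b x)
                   * (pd j (\<beta> q) x - (\<Sum>i\<in>UNIV. complex_of_real (Ga i j q x) * \<beta> i x)))"
proof -
  have dOG: "(\<lambda>y. complex_of_real (Ga i j b y)) differentiable (at x)" for i
    by (rule differentiable_of_real[OF dG])
  have dprod: "(\<lambda>y. complex_of_real (Ga i j b y) * \<beta> i y) differentiable (at x)" for i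
    using dOG db by (rule differentiable_mult)
  have "pd k (cd Ga j \<beta> b) x = pd k (pd j (\<beta> b)) x
      - pd k (\<lambda>y. \<Sum>i\<in>UNIV. complex_of_real (Ga i j b y) * \<beta> i y) x"
    unfolding cd_def using ddb dprod by (intro pd_diff differentiable_sum) auto
  also have "pd k (\<lambda>y. \<Sum>i\<in>UNIV. complex_of_real (Ga i j b y) * \<beta> i y) x
      = (\<Sum>i\<in>UNIV. complex_of_real (Ga i j b x) * pd k (\<beta> i) x + complex_of_real (pd k (Ga i j b) x) * \<beta> i x)"
    using dprod by (simp add: pd_sum pd_mult[OF dOG db] pd_of_real[OF dG])
  finally show ?thesis by (simp add: cd_def[of Ga k] cd_def[of Ga j])
qed

lemma curv_eq_curv_pt:
  fixes Ga :: "'n::finite chris"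
  assumes dG: "\<And>a b c. Ga a b c differentiable (at x)"
  shows "curv Ga k m i j x = curv_pt (\<lambda>a b c. complex_of_real (Ga a b c x))
           (\<lambda>l a b c. complex_of_real (pd l (Ga a b c) x)) k m i j"
proof -
  have cd_cd_dxf: "cd Ga i (cd Ga j (dxf k)) m x = - complex_of_real (pd i (Ga k j m) x)
      + (\<Sum>q\<in>UNIV. complex_of_real (Ga q i m x) * complex_of_real (Ga k j q x))" for i j
    using cd_cd[where \<beta>="dxf k" and Ga=Ga and k=i and j=j and b=m and x=x] dG
    by (simp add: dxf_def if_distrib sum_negf cong: if_cong)
  show ?thesis unfolding curv_def comm_def cd_cd_dxf curv_pt_def by (simp add: algebra_simps)
qed

lemma tors_cov_eq_tors_cov_pt:
  fixes Ga :: "'n::finite chris"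
  assumes dG: "\<And>a b c. Ga a b c differentiable (at x)"
  shows "complex_of_real (tors_cov Ga p n k i x) = tors_cov_pt (\<lambda>a b c. complex_of_real (Ga a b c x))
           (\<lambda>l a b c. complex_of_real (pd l (Ga a b c) x)) p n k i"
proof -
  have "tors Ga a b c = (\<lambda>y. Ga a b c y - Ga a c b y)" for a b c
    by (rule ext) (simp add: tors_def)
  then have "pd l (tors Ga a b c) x = pd l (Ga a b c) x - pd l (Ga a c b) x" for l a b c
    by (simp add: pd_diff[OF dG dG])
  then show ?thesis unfolding tors_cov_def tors_cov_pt_def by (simp add: tors_def)
qed

lemma tors_cov_antisym:
  assumes "\<And>a b c. Ga a b c differentiable (at x)"
  shows "tors_cov Ga p k n i x = - tors_cov Ga p n k i x"
proof -
  have "complex_of_real (tors_cov Ga p k n i x) = - complex_of_real (tors_cov Ga p n k i x)"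
    unfolding tors_cov_eq_tors_cov_pt[OF assms] by (rule tors_cov_pt_antisym)
  then show ?thesis by (metis of_real_eq_iff of_real_minus)
qed

lemma comm_eq_curv:
  fixes Ga :: "'n::finite chris" and \<beta> :: "'n form1"
  assumes U: "open U" "x \<in> U" and Gs: "\<And>a b c. smooth_on U (Ga a b c)"
    and bs: "\<And>p. smooth_on U (\<beta> p)"
  shows "comm Ga k j \<beta> b x = - (\<Sum>p\<in>UNIV. \<beta> p x * curv Ga p b k j x)"
proof -
  have dG: "\<And>a b c. Ga a b c differentiable (at x)" using Gs U smooth_on_differentiable by blast
  have db: "\<And>p. \<beta> p differentiable (at x)" using bs U smooth_on_differentiable by blast
  have ddb: "\<And>l p. pd l (\<beta> p) differentiable (at x)" using bs U smooth_on_differentiable smooth_on_pd by blast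
  have clairaut: "pd k (pd j (\<beta> b)) x = pd j (pd k (\<beta> b)) x"
    by (rule pd_commute[OF U]) (use bs U smooth_on_differentiable ddb in auto)
  have "(\<Sum>p\<in>UNIV. \<beta> p x * curv Ga p b k j x)
      = (\<Sum>p\<in>UNIV. \<beta> p x * curv_pt (\<lambda>a b c. complex_of_real (Ga a b c x))
                                  (\<lambda>l a b c. complex_of_real (pd l (Ga a b c) x)) p b k j)"
    by (simp add: curv_eq_curv_pt[OF dG])
  then show ?thesis
    unfolding comm_def cd_cd[OF db ddb dG] clairaut
    using commutator_pt[where dd="pd j (pd k (\<beta> b)) x" and G="\<lambda>a b c. complex_of_real (Ga a b c x)"
        and dG="\<lambda>l a b c. complex_of_real (pd l (Ga a b c) x)" and dB="\<lambda>k i. pd k (\<beta> i) x"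
        and B="\<lambda>i. \<beta> i x" and j=j and k=k and b=b]
    by simp
qed

lemma smooth_on_cd:
  fixes Ga :: "'n::finite chris" and \<beta> :: "'n form1"
  assumes U: "open U" and Gs: "\<And>a b c. smooth_on U (Ga a b c)" and bs: "\<And>p. smooth_on U (\<beta> p)"
  shows "smooth_on U (cd Ga i \<beta> p)"
  unfolding cd_def
  by (intro smooth_on_diff[OF U] smooth_on_pd bs smooth_on_sum[OF U] smooth_on_mult[OF U]
      smooth_on_of_real[OF U] Gs) auto

section \<open>Consequences of Poisson compatibility\<close>

lemma poisson_bivector_antisym: "poisson_bivector U om \<Longrightarrow> x \<in> U \<Longrightarrow> om i j x = - om j i x"
  unfolding poisson_bivector_def by blast

lemma poisson_compatible_pd:
  assumes "poisson_compatible U om Ga" "x \<in> U"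
  shows "pd m (om i j) x = - (\<Sum>k\<in>UNIV. om k j x * Ga i k m x + om i k x * Ga j k m x)"
proof -
  have "complex_of_real (pd m (om i j) x + (\<Sum>k\<in>UNIV. om k j x * Ga i k m x + om i k x * Ga j k m x)) = 0"
    using assms unfolding poisson_compatible_def cd_dxf by (simp add: sum.distrib sum_negf add.assoc)
  then have "pd m (om i j) x + (\<Sum>k\<in>UNIV. om k j x * Ga i k m x + om i k x * Ga j k m x) = 0"
    by (simp only: of_real_eq_0_iff)
  then show ?thesis by (simp add: eq_neg_iff_add_eq_0)
qed

lemma pd_bivec_pt_eq:
  assumes "poisson_compatible U om Ga" "x \<in> U"
  shows "pd_bivec_pt (\<lambda>a b. complex_of_real (om a b x)) (\<lambda>a b c. complex_of_real (Ga a b c x)) l i j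
         = complex_of_real (pd l (om i j) x)"
  unfolding pd_bivec_pt_def poisson_compatible_pd[OF assms] by simp

lemma pd2_bivec_pt_eq:
  fixes om :: "'n::finite bivec" and Ga :: "'n chris"
  assumes U: "open U" "x \<in> U" and os: "\<And>i j. smooth_on U (om i j)"
    and Gs: "\<And>a b c. smooth_on U (Ga a b c)" and pc: "poisson_compatible U om Ga"
  shows "pd2_bivec_pt (\<lambda>a b. complex_of_real (om a b x)) (\<lambda>a b c. complex_of_real (Ga a b c x))
           (\<lambda>l a b c. complex_of_real (pd l (Ga a b c) x)) n m i j
         = complex_of_real (pd n (pd m (om i j)) x)"
proof -
  have dO: "\<And>a b. om a b differentiable (at x)" using os U smooth_on_differentiable by blast
  have dG: "\<And>a b c. Ga a b c differentiable (at x)" using Gs U smooth_on_differentiable by blast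
  have ddO: "pd m (om i j) differentiable (at x)" using os U smooth_on_differentiable smooth_on_pd by blast
  define S where "S y = (\<Sum>k\<in>UNIV. om k j y * Ga i k m y + om i k y * Ga j k m y)" for y
  have dprod: "(\<lambda>y. om a b y * Ga a' b' c' y) differentiable (at x)" for a b a' b' c'
    using dO dG by (rule differentiable_mult)
  have dsummand: "(\<lambda>y. om k j y * Ga i k m y + om i k y * Ga j k m y) differentiable (at x)" for k
    by (intro differentiable_add dprod)
  have "pd n (\<lambda>y. pd m (om i j) y + S y) x = pd n (\<lambda>y. 0) x"
    by (intro pd_eq_on_open[OF U]) (simp add: S_def poisson_compatible_pd[OF pc])
  moreover have "pd n (\<lambda>y. pd m (om i j) y + S y) x = pd n (pd m (om i j)) x + pd n S x"
    unfolding S_def using ddO dsummand by (intro pd_add differentiable_sum) auto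
  moreover have "pd n S x = (\<Sum>k\<in>UNIV. om k j x * pd n (Ga i k m) x + pd n (om k j) x * Ga i k m x
                      + (om i k x * pd n (Ga j k m) x + pd n (om i k) x * Ga j k m x))"
    unfolding S_def using dsummand by (simp add: pd_sum pd_add[OF dprod dprod] pd_mult[OF dO dG])
  ultimately have "pd n (pd m (om i j)) x = - (\<Sum>k\<in>UNIV. om k j x * pd n (Ga i k m) x + pd n (om k j) x * Ga i k m x
                      + (om i k x * pd n (Ga j k m) x + pd n (om i k) x * Ga j k m x))"
    by (simp add: eq_neg_iff_add_eq_0)
  then show ?thesis
    unfolding pd2_bivec_pt_def pd_bivec_pt_eq[OF pc U(2)] by (simp add: algebra_simps)
qed

text \<open>By H_pt_alternation this is a difference of second derivatives of omega.\<close>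

lemma Hc_alternation_zero:
  fixes om :: "'n::finite bivec" and Ga :: "'n chris"
  assumes U: "open U" "x \<in> U" and os: "\<And>i j. smooth_on U (om i j)"
    and Gs: "\<And>a b c. smooth_on U (Ga a b c)"
    and pb: "poisson_bivector U om" and pc: "poisson_compatible U om Ga"
  shows "Hc om Ga a b m n x - Hc om Ga b a m n x - Hc om Ga a b n m x + Hc om Ga b a n m x = 0"
proof -
  define w where "w a b = complex_of_real (om a b x)" for a b
  define G where "G a b c = complex_of_real (Ga a b c x)" for a b c
  define dG where "dG l a b c = complex_of_real (pd l (Ga a b c) x)" for l a b c
  have dGa: "\<And>a b c. Ga a b c differentiable (at x)" using Gs U smooth_on_differentiable by blast
  have Hc_eq: "Hc om Ga i j m n x = H_pt w G dG i j m n" for i j m n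
    unfolding Hc_def H_pt_def w_def G_def dG_def curv_eq_curv_pt[OF dGa] tors_cov_eq_tors_cov_pt[OF dGa] ..
  have "w i j = - w j i" for i j
    unfolding w_def using poisson_bivector_antisym[OF pb U(2), of i j] by simp
  then obtain u where wu: "w = (\<lambda>i j. u i j - u j i)"
    using antisym_eq_diff_transpose[of w] by blast
  have H_alt: "Hc om Ga a b m n x - Hc om Ga b a m n x - Hc om Ga a b n m x + Hc om Ga b a n m x
      = (pd2_bivec_pt w G dG m n a b - pd2_bivec_pt w G dG n m a b) / 2"
    unfolding Hc_eq wu by (rule H_pt_alternation)
  have "pd m (pd n (om a b)) x = pd n (pd m (om a b)) x"
    by (rule pd_commute[OF U]) (use os U in \<open>auto intro: smooth_on_differentiable smooth_on_pd\<close>)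
  then have "pd2_bivec_pt w G dG m n a b = pd2_bivec_pt w G dG n m a b"
    unfolding w_def G_def dG_def pd2_bivec_pt_eq[OF U os Gs pc] by simp
  with H_alt show ?thesis by simp
qed

section \<open>The map wedge_1 on the image of q\<close>

definition wedge_lin :: "'n::finite bivec \<Rightarrow> 'n chris \<Rightarrow> 'n ten2 \<times> 'n ten2 \<Rightarrow> 'n ten2 \<times> 'n ten2" where
  "wedge_lin om Ga s = (alt (fst s),
     alt (\<lambda>m n x. snd s m n x + (\<Sum>i\<in>UNIV. \<Sum>j\<in>UNIV. Hc om Ga i j m n x * fst s i j x)))"

lemma wedge_lin_ladd: "wedge_lin om Ga (ladd s t) = ladd (wedge_lin om Ga s) (wedge_lin om Ga t)"
  unfolding wedge_lin_def ladd_def tadd_def alt_def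
  by (auto intro!: ext simp: sum.distrib algebra_simps)

lemma wedge_lin_tens1: "wedge_lin om Ga (tens1 om Ga xi eta) = wedge1 om Ga xi eta"
  unfolding wedge_lin_def tens1_def wedge1_def
  by (auto intro!: ext simp: tprod_def alt_def mult_ac)

lemma cd_zero: "cd Ga i (\<lambda>m x. 0) = (\<lambda>m x. 0)"
  unfolding cd_def by (intro ext) simp

lemma tens1_zero: "tens1 om Ga (\<lambda>m x. 0, \<lambda>m x. 0) (\<lambda>m x. 0, \<lambda>m x. 0) = (zten, zten)"
  unfolding tens1_def by (auto intro!: ext simp: tprod_def zten_def cd_zero)

lemma tens1_order1: "tens1 om Ga (\<lambda>m x. 0, X) (Y, \<lambda>m x. 0) = (zten, tprod X Y)"
  unfolding tens1_def by (auto intro!: ext simp: tprod_def zten_def cd_zero)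

lemma tadd_zten: "tadd zten t = t" "tadd t zten = t"
  unfolding tadd_def zten_def by auto

lemma ladd_cancel: "ladd p q = ladd p r \<Longrightarrow> q = r"
  unfolding ladd_def tadd_def by (simp add: prod_eq_iff fun_eq_iff)

definition restrict_ten :: "'n ten2 \<Rightarrow> 'n set \<Rightarrow> 'n ten2" where
  "restrict_ten t L = (\<lambda>m n x. if n \<in> L then t m n x else 0)"

lemma restrict_ten_empty: "restrict_ten t {} = zten"
  unfolding restrict_ten_def zten_def by simp

lemma restrict_ten_UNIV: "restrict_ten t UNIV = t"
  unfolding restrict_ten_def by simp

lemma restrict_ten_insert:
  "l \<notin> L \<Longrightarrow> restrict_ten t (insert l L) = tadd (restrict_ten t L) (tprod (\<lambda>m x. t m l x) (dxf l))"
  unfolding restrict_ten_def tadd_def tprod_def dxf_def by (auto intro!: ext)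

text \<open>Every pair is a finite sum of values of tens1, adding one column dx^l of the tensor at a
time; an additive map is therefore determined by its values on tens1.\<close>

lemma additive_eq_wedge_lin_order1:
  assumes add: "\<forall>s t. W (ladd s t) = ladd (W s) (W t)"
    and tens: "\<forall>xi eta. W (tens1 om Ga xi eta) = wedge1 om Ga xi eta"
  shows "W (zten, t) = wedge_lin om Ga (zten, t)"
proof -
  have "W (zten, restrict_ten t L) = wedge_lin om Ga (zten, restrict_ten t L)" if "finite L" for L
    using that
  proof (induction L rule: finite_induct)
    case empty
    show ?case
      unfolding restrict_ten_empty
      using tens wedge_lin_tens1 tens1_zero[of om Ga] by metis
  next
    case (insert l L)
    have "(zten, restrict_ten t (insert l L))
        = ladd (zten, restrict_ten t L) (zten, tprod (\<lambda>m x. t m l x) (dxf l))"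
      unfolding ladd_def restrict_ten_insert[OF insert(2)] by (simp add: tadd_zten)
    moreover have "W (zten, tprod (\<lambda>m x. t m l x) (dxf l)) = wedge_lin om Ga (zten, tprod (\<lambda>m x. t m l x) (dxf l))"
      using tens wedge_lin_tens1 tens1_order1[of om Ga "\<lambda>m x. t m l x" "dxf l"] by metis
    ultimately show ?case using add wedge_lin_ladd insert(3) by metis
  qed
  from this[of UNIV] show ?thesis by (simp add: restrict_ten_UNIV)
qed

lemma additive_eq_wedge_lin:
  assumes add: "\<forall>s t. W (ladd s t) = ladd (W s) (W t)"
    and tens: "\<forall>xi eta. W (tens1 om Ga xi eta) = wedge1 om Ga xi eta"
  shows "W = wedge_lin om Ga"
proof -
  have order1: "W (zten, t) = wedge_lin om Ga (zten, t)" for t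
    using additive_eq_wedge_lin_order1[OF add tens] .
  have "\<forall>t. W (restrict_ten s L, t) = wedge_lin om Ga (restrict_ten s L, t)" if "finite L" for s L
    using that
  proof (induction L rule: finite_induct)
    case empty
    show ?case unfolding restrict_ten_empty using order1 by blast
  next
    case (insert l L)
    show ?case
    proof
      fix t
      let ?g = "\<lambda>m x. s m l x"
      define R where "R = snd (tens1 om Ga (?g, \<lambda>m x. 0) (dxf l, \<lambda>m x. 0))"
      have R: "tens1 om Ga (?g, \<lambda>m x. 0) (dxf l, \<lambda>m x. 0) = ladd (zten, R) (tprod ?g (dxf l), zten)"
        unfolding R_def ladd_def by (simp add: tens1_def tadd_zten)
      have "ladd (wedge_lin om Ga (zten, R)) (W (tprod ?g (dxf l), zten))
          = ladd (wedge_lin om Ga (zten, R)) (wedge_lin om Ga (tprod ?g (dxf l), zten))"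
        using R tens wedge_lin_tens1 add wedge_lin_ladd order1 by metis
      then have "W (tprod ?g (dxf l), zten) = wedge_lin om Ga (tprod ?g (dxf l), zten)"
        by (rule ladd_cancel)
      moreover have "(restrict_ten s (insert l L), t) = ladd (restrict_ten s L, t) (tprod ?g (dxf l), zten)"
        unfolding ladd_def restrict_ten_insert[OF insert(2)] by (simp add: tadd_zten)
      ultimately show "W (restrict_ten s (insert l L), t) = wedge_lin om Ga (restrict_ten s (insert l L), t)"
        using add wedge_lin_ladd insert(3) by metis
    qed
  qed
  from this[where L=UNIV] have "W (s, t) = wedge_lin om Ga (s, t)" for s t
    by (simp add: restrict_ten_UNIV)
  then show ?thesis by (intro ext) (metis prod.collapse)
qed

lemma wedgeQ_eq_wedge_lin: "wedgeQ om Ga = wedge_lin om Ga"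
  unfolding wedgeQ_def
proof (rule the_equality)
  show "(\<forall>s t. wedge_lin om Ga (ladd s t) = ladd (wedge_lin om Ga s) (wedge_lin om Ga t)) \<and>
        (\<forall>xi eta. wedge_lin om Ga (tens1 om Ga xi eta) = wedge1 om Ga xi eta)"
    using wedge_lin_ladd wedge_lin_tens1 by blast
next
  fix W
  assume "(\<forall>s t. W (ladd s t) = ladd (W s) (W t)) \<and> (\<forall>xi eta. W (tens1 om Ga xi eta) = wedge1 om Ga xi eta)"
  then show "W = wedge_lin om Ga" using additive_eq_wedge_lin by blast
qed

lemma fst_wedge_sigma_plus_id:
  "fst (wedge_lin om Ga (ladd (sigmaQ_el om Ga eta xi) (tens1 om Ga eta xi))) k n x = 0"
  unfolding wedge_lin_def alt_def ladd_def sigmaQ_el_def tens1_def tadd_def tprod_def zten_def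
  by (simp add: algebra_simps)

lemma snd_wedge_sigma_plus_id_eq:
  fixes om :: "'n::finite bivec" and Ga :: "'n chris" and xi eta :: "'n form1 \<times> 'n form1"
    and x :: "real^'n"
  defines "V \<equiv> \<lambda>m n. (fst xi m x * snd eta n x + snd xi m x * fst eta n x
        + 1/2 * (\<Sum>i\<in>UNIV. \<Sum>j\<in>UNIV. complex_of_real (om i j x) * (cd Ga i (fst xi) m x * cd Ga j (fst eta) n x)))
      + ((\<Sum>i\<in>UNIV. \<Sum>j\<in>UNIV. complex_of_real (om i j x) * (cd Ga j (fst xi) m x * cd Ga i (fst eta) n x))
         + (\<Sum>i\<in>UNIV. \<Sum>j\<in>UNIV. complex_of_real (om i j x) * fst xi j x * comm Ga m i (fst eta) n x))
      + (fst eta m x * snd xi n x + snd eta m x * fst xi n x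
        + 1/2 * (\<Sum>i\<in>UNIV. \<Sum>j\<in>UNIV. complex_of_real (om i j x) * (cd Ga i (fst eta) m x * cd Ga j (fst xi) n x)))
      + (\<Sum>i\<in>UNIV. \<Sum>j\<in>UNIV. Hc om Ga i j m n x * (fst xi i x * fst eta j x + fst eta i x * fst xi j x))"
  shows "snd (wedge_lin om Ga (ladd (sigmaQ_el om Ga eta xi) (tens1 om Ga eta xi))) k n x = V k n - V n k"
proof -
  have dxf_contract: "(\<Sum>k'\<in>UNIV. c * (dxf k' m x * f k')) = c * f m" for c and f :: "'n \<Rightarrow> complex" and m
  proof -
    have "(\<Sum>k'\<in>UNIV. c * (dxf k' m x * f k')) = (\<Sum>k'\<in>UNIV. if k' = m then c * f m else 0)"
      by (rule sum.cong) (auto simp: dxf_def)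
    then show ?thesis by simp
  qed
  show ?thesis
    unfolding V_def wedge_lin_def alt_def ladd_def sigmaQ_el_def tens1_def tadd_def tprod_def zten_def
    by (simp add: dxf_contract)
qed

lemma snd_wedge_sigma_plus_id:
  fixes om :: "'n::finite bivec" and Ga :: "'n chris" and xi eta :: "'n form1 \<times> 'n form1"
  assumes U: "open U" "x \<in> U" and os: "\<And>i j. smooth_on U (om i j)"
    and Gs: "\<And>a b c. smooth_on U (Ga a b c)"
    and pb: "poisson_bivector U om" and pc: "poisson_compatible U om Ga"
    and es: "\<And>p. smooth_on U (fst eta p)"
  shows "snd (wedge_lin om Ga (ladd (sigmaQ_el om Ga eta xi) (tens1 om Ga eta xi))) k n x =
         alt (\<lambda>k n x. (1/2) * (\<Sum>j\<in>UNIV. \<Sum>p\<in>UNIV. \<Sum>i\<in>UNIV.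
                        fst xi j x * fst eta p x *
                        complex_of_real (om j i x * tors_cov Ga p n k i x))) k n x"
proof -
  define w where "w i j = complex_of_real (om i j x)" for i j
  define C where "C p n k i = curv Ga p n k i x" for p n k i
  define T where "T p n k i = complex_of_real (tors_cov Ga p n k i x)" for p n k i
  have anti: "w i j = - w j i" for i j
    unfolding w_def using poisson_bivector_antisym[OF pb U(2), of i j] by simp
  have comm: "comm Ga m i (fst eta) n x = - (\<Sum>p\<in>UNIV. fst eta p x * C p n m i)" for m i n
    unfolding C_def by (rule comm_eq_curv[OF U Gs es])
  have H_def: "Hc om Ga i j m n x = 1/4 * (\<Sum>s\<in>UNIV. w i s * (T j n m s - 2 * C j n m s))" for i j m n
    unfolding Hc_def w_def T_def C_def by simp
  show ?thesis
    using sigma_plus_id_order1_pt[where w=w and C=C and T=T and H="\<lambda>i j m n. Hc om Ga i j m n x"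
        and X="\<lambda>p. fst xi p x" and Xb="\<lambda>p. snd xi p x" and Y="\<lambda>p. fst eta p x" and Yb="\<lambda>p. snd eta p x"
        and cX="\<lambda>i m. cd Ga i (fst xi) m x" and cY="\<lambda>i m. cd Ga i (fst eta) m x" and k=k and n=n,
        OF anti Hc_alternation_zero[OF U os Gs pb pc] H_def]
    unfolding snd_wedge_sigma_plus_id_eq comm w_def T_def alt_def by (simp add: of_real_mult)
qed

lemma wedgeQ_sigma_plus_id:
  fixes om :: "'n::finite bivec" and Ga :: "'n chris" and xi eta :: "'n form1 \<times> 'n form1"
  assumes "open U" "x \<in> U" "\<And>i j. smooth_on U (om i j)" "\<And>a b c. smooth_on U (Ga a b c)"
    and "poisson_bivector U om" "poisson_compatible U om Ga" "lsmooth1 U eta"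
  shows "fst (wedgeQ om Ga (ladd (sigmaQ_el om Ga eta xi) (tens1 om Ga eta xi))) k n x = 0"
    and "snd (wedgeQ om Ga (ladd (sigmaQ_el om Ga eta xi) (tens1 om Ga eta xi))) k n x =
         alt (\<lambda>k n x. (1/2) * (\<Sum>j\<in>UNIV. \<Sum>p\<in>UNIV. \<Sum>i\<in>UNIV.
                        fst xi j x * fst eta p x *
                        complex_of_real (om j i x * tors_cov Ga p n k i x))) k n x"
proof -
  have "\<And>p. smooth_on U (fst eta p)" using assms(7) unfolding lsmooth1_def by blast
  then show "snd (wedgeQ om Ga (ladd (sigmaQ_el om Ga eta xi) (tens1 om Ga eta xi))) k n x =
         alt (\<lambda>k n x. (1/2) * (\<Sum>j\<in>UNIV. \<Sum>p\<in>UNIV. \<Sum>i\<in>UNIV.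
                        fst xi j x * fst eta p x *
                        complex_of_real (om j i x * tors_cov Ga p n k i x))) k n x"
    unfolding wedgeQ_eq_wedge_lin by (rule snd_wedge_sigma_plus_id[OF assms(1-6)])
qed (simp only: wedgeQ_eq_wedge_lin fst_wedge_sigma_plus_id)

section \<open>The quantum torsion and the right module structure\<close>

lemma fst_torsQ:
  "fst (torsQ om Ga \<zeta>) k n x = (\<Sum>i\<in>UNIV. complex_of_real (Ga i n k x - Ga i k n x) * fst \<zeta> i x)"
  unfolding torsQ_def wedgeQ_eq_wedge_lin wedge_lin_def lsub_def tsub_def nablaQ_def dform_def alt_def cd_def
  by (simp add: sum_subtractf algebra_simps)

lemma snd_torsQ:
  fixes om :: "'n::finite bivec" and Ga :: "'n chris" and \<zeta> :: "'n form1 \<times> 'n form1"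
  assumes U: "open U" "x \<in> U" and Gs: "\<And>a b c. smooth_on U (Ga a b c)"
    and zs: "\<And>i p. smooth_on U (cd Ga i (fst \<zeta>) p)"
  shows "snd (torsQ om Ga \<zeta>) k n x =
     (\<Sum>i\<in>UNIV. complex_of_real (Ga i n k x - Ga i k n x) * snd \<zeta> i x)
     + 1/2 * (\<Sum>i\<in>UNIV. \<Sum>j\<in>UNIV. complex_of_real (om i j x)
                * (\<Sum>p\<in>UNIV. cd Ga i (fst \<zeta>) p x * (curv Ga p n k j x - curv Ga p k n j x)))
     + (\<Sum>i\<in>UNIV. \<Sum>j\<in>UNIV. (Hc om Ga i j k n x - Hc om Ga i j n k x) * cd Ga i (fst \<zeta>) j x)"
proof -
  have comm: "comm Ga m j (cd Ga i (fst \<zeta>)) b x = - (\<Sum>p\<in>UNIV. cd Ga i (fst \<zeta>) p x * curv Ga p b m j x)"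
    for m j i b
    by (rule comm_eq_curv[OF U Gs zs])
  have cd_snd: "cd Ga m (snd \<zeta>) b x - pd m (snd \<zeta> b) x = - (\<Sum>i\<in>UNIV. complex_of_real (Ga i m b x) * snd \<zeta> i x)"
    for m b
    unfolding cd_def by simp
  have "snd (torsQ om Ga \<zeta>) k n x =
     (cd Ga k (snd \<zeta>) n x - pd k (snd \<zeta> n) x) - (cd Ga n (snd \<zeta>) k x - pd n (snd \<zeta> k) x)
     - 1/2 * (\<Sum>i\<in>UNIV. \<Sum>j\<in>UNIV. complex_of_real (om i j x) * comm Ga k j (cd Ga i (fst \<zeta>)) n x)
     + 1/2 * (\<Sum>i\<in>UNIV. \<Sum>j\<in>UNIV. complex_of_real (om i j x) * comm Ga n j (cd Ga i (fst \<zeta>)) k x)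
     + (\<Sum>i\<in>UNIV. \<Sum>j\<in>UNIV. (Hc om Ga i j k n x - Hc om Ga i j n k x) * cd Ga i (fst \<zeta>) j x)"
    unfolding torsQ_def wedgeQ_eq_wedge_lin wedge_lin_def lsub_def tsub_def nablaQ_def dform_def alt_def
    by (simp add: sum_subtractf algebra_simps)
  then show ?thesis
    unfolding cd_snd comm by (simp add: sum_subtractf sum_negf sum.distrib sum_distrib_left algebra_simps)
qed

lemma pd_fst_torsQ:
  fixes Ga :: "'n::finite chris"
  assumes dG: "\<And>a b c. Ga a b c differentiable (at x)" and dz: "\<And>p. fst \<zeta> p differentiable (at x)"
  shows "pd j (fst (torsQ om Ga \<zeta>) k n) x
       = (\<Sum>i\<in>UNIV. complex_of_real (pd j (Ga i n k) x - pd j (Ga i k n) x) * fst \<zeta> i x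
                    + complex_of_real (Ga i n k x - Ga i k n x) * pd j (fst \<zeta> i) x)"
proof -
  have dT: "(\<lambda>y. Ga i n k y - Ga i k n y) differentiable (at x)" for i
    by (intro differentiable_diff dG)
  have dOT: "(\<lambda>y. complex_of_real (Ga i n k y - Ga i k n y)) differentiable (at x)" for i
    using dT by (rule differentiable_of_real)
  have pd_tors: "pd j (\<lambda>y. complex_of_real (Ga i n k y - Ga i k n y)) x
      = complex_of_real (pd j (Ga i n k) x - pd j (Ga i k n) x)" for i
    by (simp only: pd_of_real[OF dT] pd_diff[OF dG dG])
  have "fst (torsQ om Ga \<zeta>) k n = (\<lambda>y. \<Sum>i\<in>UNIV. complex_of_real (Ga i n k y - Ga i k n y) * fst \<zeta> i y)"
    by (intro ext) (rule fst_torsQ)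
  then have "pd j (fst (torsQ om Ga \<zeta>) k n) x
      = pd j (\<lambda>y. \<Sum>i\<in>UNIV. complex_of_real (Ga i n k y - Ga i k n y) * fst \<zeta> i y) x"
    by (simp only:)
  also have "\<dots> = (\<Sum>i\<in>UNIV. pd j (\<lambda>y. complex_of_real (Ga i n k y - Ga i k n y) * fst \<zeta> i y) x)"
    by (intro pd_sum finite_class.finite_UNIV differentiable_mult[OF dOT dz])
  also have "\<dots> = (\<Sum>i\<in>UNIV. complex_of_real (Ga i n k x - Ga i k n x) * pd j (fst \<zeta> i) x
      + pd j (\<lambda>y. complex_of_real (Ga i n k y - Ga i k n y)) x * fst \<zeta> i x)"
    by (intro sum.cong refl pd_mult dOT dz)
  finally show ?thesis
    unfolding pd_tors by (simp add: algebra_simps)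
qed

lemma cd_fst_ract1:
  assumes "fst a differentiable (at x)" "fst xi p differentiable (at x)"
  shows "cd Ga i (fst (ract1 om Ga xi a)) p x = pd i (fst a) x * fst xi p x + fst a x * cd Ga i (fst xi) p x"
  unfolding ract1_def cd_def using pd_mult[OF assms]
  by (simp add: sum_distrib_left algebra_simps)

lemma torsQ_ract1_fst:
  "fst (torsQ om Ga (ract1 om Ga xi a)) k n x = fst (ract2 om Ga (torsQ om Ga xi) a) k n x"
  unfolding fst_torsQ ract2_def by (simp add: ract1_def fst_torsQ sum_distrib_left algebra_simps)

lemma cov_deriv_torsion_contraction_pt:
  fixes G :: "'n::finite\<Rightarrow>'n\<Rightarrow>'n\<Rightarrow>complex" and dG :: "'n\<Rightarrow>'n\<Rightarrow>'n\<Rightarrow>'n\<Rightarrow>complex"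
    and X :: "'n \<Rightarrow> complex" and dX :: "'n \<Rightarrow> 'n \<Rightarrow> complex"
  defines "F0 \<equiv> \<lambda>k n. \<Sum>i\<in>UNIV. (G i n k - G i k n) * X i"
  shows "(\<Sum>i\<in>UNIV. (dG s i n k - dG s i k n) * X i + (G i n k - G i k n) * dX s i)
          - (\<Sum>p\<in>UNIV. G p s k * F0 p n) - (\<Sum>p\<in>UNIV. G p s n * F0 k p)
        = (\<Sum>j\<in>UNIV. tors_cov_pt G dG j n k s * X j) + (\<Sum>j\<in>UNIV. (G j n k - G j k n) * (dX s j - (\<Sum>q\<in>UNIV. G q s j * X q)))"
  unfolding F0_def tors_cov_pt_def
  apply (simp add: sum_distrib_left sum_distrib_right sum_subtractf sum.distrib algebra_simps sum_negf)
  apply (simp only: sum.distrib[symmetric])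
  apply (rule double_sum_eq_symmetrized)
  apply (simp add: algebra_simps)
  done

lemma torsQ_module_defect_pt:
  fixes w :: "'n::finite \<Rightarrow> 'n \<Rightarrow> complex" and G :: "'n\<Rightarrow>'n\<Rightarrow>'n\<Rightarrow>complex"
    and dG Cv :: "'n\<Rightarrow>'n\<Rightarrow>'n\<Rightarrow>'n\<Rightarrow>complex" and X Xb da :: "'n \<Rightarrow> complex"
    and dX :: "'n \<Rightarrow> 'n \<Rightarrow> complex"
  defines "Tc \<equiv> tors_cov_pt G dG"
  defines "H \<equiv> \<lambda>i j m n. 1/4 * (\<Sum>s\<in>UNIV. w i s * (Tc j n m s - 2 * Cv j n m s))"
  defines "cdX \<equiv> \<lambda>i p. dX i p - (\<Sum>q\<in>UNIV. G q i p * X q)"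
  defines "TQ \<equiv> \<lambda>(Z1::'n\<Rightarrow>complex) (cdZ::'n\<Rightarrow>'n\<Rightarrow>complex) k n. (\<Sum>i\<in>UNIV. (G i n k - G i k n) * Z1 i)
      + 1/2 * (\<Sum>i\<in>UNIV. \<Sum>j\<in>UNIV. w i j * (\<Sum>p\<in>UNIV. cdZ i p * (Cv p n k j - Cv p k n j)))
      + (\<Sum>i\<in>UNIV. \<Sum>j\<in>UNIV. (H i j k n - H i j n k) * cdZ i j)"
  defines "F0 \<equiv> \<lambda>k n. \<Sum>i\<in>UNIV. (G i n k - G i k n) * X i"
  defines "cd2F \<equiv> \<lambda>j k n. (\<Sum>i\<in>UNIV. (dG j i n k - dG j i k n) * X i + (G i n k - G i k n) * dX j i)
          - (\<Sum>p\<in>UNIV. G p j k * F0 p n) - (\<Sum>p\<in>UNIV. G p j n * F0 k p)"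
  shows "TQ (\<lambda>i. aa * Xb i + ab * X i - 1/2 * (\<Sum>i'\<in>UNIV. \<Sum>j'\<in>UNIV. w i' j' * da i' * cdX j' i))
             (\<lambda>i p. da i * X p + aa * cdX i p) k n
     - (aa * TQ Xb cdX k n + ab * F0 k n - 1/2 * (\<Sum>i\<in>UNIV. \<Sum>j\<in>UNIV. w i j * da i * cd2F j k n))
   = 1/2 * (\<Sum>j\<in>UNIV. \<Sum>p\<in>UNIV. \<Sum>i\<in>UNIV. da j * X p * (w j i * (Tc p n k i - Tc p k n i)))"
proof -
  define P where "P t = 1/2 * (\<Sum>i'\<in>UNIV. \<Sum>j'\<in>UNIV. w i' j' * da i' * cdX j' t)" for t
  have lin: "TQ (\<lambda>i. aa * Xb i + ab * X i - 1/2 * (\<Sum>i'\<in>UNIV. \<Sum>j'\<in>UNIV. w i' j' * da i' * cdX j' i))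
             (\<lambda>i p. da i * X p + aa * cdX i p) k n
      = aa * TQ Xb cdX k n + ab * F0 k n - (\<Sum>t\<in>UNIV. (G t n k - G t k n) * P t)
        + 1/2 * (\<Sum>i\<in>UNIV. \<Sum>j\<in>UNIV. w i j * (\<Sum>p\<in>UNIV. da i * X p * (Cv p n k j - Cv p k n j)))
        + (\<Sum>i\<in>UNIV. \<Sum>j\<in>UNIV. (H i j k n - H i j n k) * (da i * X j))"
    unfolding TQ_def F0_def P_def
    by (simp add: sum_distrib_left sum_distrib_right sum_subtractf sum.distrib algebra_simps diff_divide_distrib add_divide_distrib)
  have lb: "cd2F j k n = (\<Sum>t\<in>UNIV. Tc t n k j * X t) + (\<Sum>t\<in>UNIV. (G t n k - G t k n) * cdX j t)" for j
    unfolding cd2F_def Tc_def cdX_def using cov_deriv_torsion_contraction_pt[where s=j and G=G and dG=dG and X=X and dX=dX] unfolding F0_def by simp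
  have e1: "1/2 * (\<Sum>i\<in>UNIV. \<Sum>j\<in>UNIV. w i j * da i * (\<Sum>t\<in>UNIV. (G t n k - G t k n) * cdX j t))
      = (\<Sum>t\<in>UNIV. (G t n k - G t k n) * P t)"
  proof -
    have "1/2 * (\<Sum>i\<in>UNIV. \<Sum>j\<in>UNIV. w i j * da i * (\<Sum>t\<in>UNIV. (G t n k - G t k n) * cdX j t))
        = (\<Sum>i\<in>UNIV. \<Sum>j\<in>UNIV. \<Sum>t\<in>UNIV. (G t n k - G t k n) * (1/2 * (w i j * da i * cdX j t)))"
      by (simp add: sum_distrib_left algebra_simps diff_divide_distrib add_divide_distrib)
    also have "\<dots> = (\<Sum>t\<in>UNIV. \<Sum>i\<in>UNIV. \<Sum>j\<in>UNIV. (G t n k - G t k n) * (1/2 * (w i j * da i * cdX j t)))"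
      by (rule sym, rule sum_swap3)
    also have "\<dots> = (\<Sum>t\<in>UNIV. (G t n k - G t k n) * P t)"
      unfolding P_def by (simp add: sum_distrib_left algebra_simps diff_divide_distrib add_divide_distrib)
    finally show ?thesis .
  qed
  have e2: "(\<Sum>i\<in>UNIV. \<Sum>j\<in>UNIV. w i j * da i * (\<Sum>t\<in>UNIV. Tc t n k j * X t))
      = (\<Sum>i\<in>UNIV. \<Sum>t\<in>UNIV. \<Sum>j\<in>UNIV. da i * X t * (w i j * Tc t n k j))"
    unfolding sum_mult_inner_sum by (simp add: mult_ac)
  have e3: "(\<Sum>i\<in>UNIV. \<Sum>j\<in>UNIV. w i j * (\<Sum>p\<in>UNIV. da i * X p * (Cv p n k j - Cv p k n j)))
      = (\<Sum>i\<in>UNIV. \<Sum>p\<in>UNIV. \<Sum>j\<in>UNIV. da i * X p * (w i j * (Cv p n k j - Cv p k n j)))"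
    unfolding sum_mult_inner_sum by (simp add: mult_ac)
  have e4: "(\<Sum>i\<in>UNIV. \<Sum>j\<in>UNIV. (H i j k n - H i j n k) * (da i * X j))
     = (\<Sum>i\<in>UNIV. \<Sum>p\<in>UNIV. \<Sum>j\<in>UNIV. da i * X p * (1/4 * (w i j * (Tc p n k j - Tc p k n j))
          - 1/2 * (w i j * (Cv p n k j - Cv p k n j))))"
    unfolding H_def by (simp add: sum_distrib_left sum_distrib_right sum_subtractf sum.distrib algebra_simps diff_divide_distrib add_divide_distrib)
  have ta: "\<And>p i. Tc p k n i = - Tc p n k i" unfolding Tc_def by (rule tors_cov_pt_antisym)
  have "TQ (\<lambda>i. aa * Xb i + ab * X i - 1/2 * (\<Sum>i'\<in>UNIV. \<Sum>j'\<in>UNIV. w i' j' * da i' * cdX j' i))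
             (\<lambda>i p. da i * X p + aa * cdX i p) k n
     - (aa * TQ Xb cdX k n + ab * F0 k n - 1/2 * (\<Sum>i\<in>UNIV. \<Sum>j\<in>UNIV. w i j * da i * cd2F j k n))
    = 1/2 * (\<Sum>i\<in>UNIV. \<Sum>j\<in>UNIV. w i j * (\<Sum>p\<in>UNIV. da i * X p * (Cv p n k j - Cv p k n j)))
        + (\<Sum>i\<in>UNIV. \<Sum>j\<in>UNIV. (H i j k n - H i j n k) * (da i * X j))
        + 1/2 * (\<Sum>i\<in>UNIV. \<Sum>j\<in>UNIV. w i j * da i * (\<Sum>t\<in>UNIV. Tc t n k j * X t))"
    unfolding lin lb using e1
    by (simp add: distrib_left sum.distrib algebra_simps diff_divide_distrib add_divide_distrib)
  also have "\<dots> = 1/2 * (\<Sum>j\<in>UNIV. \<Sum>p\<in>UNIV. \<Sum>i\<in>UNIV. da j * X p * (w j i * (Tc p n k i - Tc p k n i)))"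
    unfolding e2 e3 e4 ta
    by (simp add: sum_distrib_left sum_subtractf sum.distrib algebra_simps diff_divide_distrib add_divide_distrib)
  finally show ?thesis .
qed

lemma torsQ_module_defect_alternated:
  fixes om :: "'n::finite bivec" and Ga :: "'n chris" and xi :: "'n form1 \<times> 'n form1" and a :: "'n fn \<times> 'n fn"
  assumes U: "open U" "x \<in> U" and Gs: "\<And>a b c. smooth_on U (Ga a b c)"
    and xs: "lsmooth1 U xi" and as: "lsmooth0 U a"
  shows "snd (torsQ om Ga (ract1 om Ga xi a)) k n x - snd (ract2 om Ga (torsQ om Ga xi) a) k n x
       = 1/2 * (\<Sum>j\<in>UNIV. \<Sum>p\<in>UNIV. \<Sum>i\<in>UNIV. pd j (fst a) x * fst xi p x *
            (complex_of_real (om j i x) * (complex_of_real (tors_cov Ga p n k i x)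
                                            - complex_of_real (tors_cov Ga p k n i x))))"
proof -
  have x0s: "\<And>p. smooth_on U (fst xi p)" using xs unfolding lsmooth1_def by blast
  have a0s: "smooth_on U (fst a)" using as unfolding lsmooth0_def by blast
  have "smooth_on U (fst (ract1 om Ga xi a) p)" for p
    using smooth_on_mult[OF U(1) a0s x0s] unfolding ract1_def by simp
  then have cd_xia: "\<And>i p. smooth_on U (cd Ga i (fst (ract1 om Ga xi a)) p)"
    by (rule smooth_on_cd[OF U(1) Gs])
  have cd_xi: "\<And>i p. smooth_on U (cd Ga i (fst xi) p)" by (rule smooth_on_cd[OF U(1) Gs x0s])
  have dGa: "\<And>a b c. Ga a b c differentiable (at x)" using Gs U smooth_on_differentiable by blast
  have dx0: "\<And>p. fst xi p differentiable (at x)" using x0s U smooth_on_differentiable by blast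
  have da0: "fst a differentiable (at x)" using a0s U smooth_on_differentiable by blast
  define w where "w i j = complex_of_real (om i j x)" for i j
  define G where "G a b c = complex_of_real (Ga a b c x)" for a b c
  define dG where "dG l a b c = complex_of_real (pd l (Ga a b c) x)" for l a b c
  define Cv where "Cv p n k j = curv Ga p n k j x" for p n k j
  define X where "X p = fst xi p x" for p
  define Xb where "Xb p = snd xi p x" for p
  define da where "da i = pd i (fst a) x" for i
  define dX where "dX l p = pd l (fst xi p) x" for l p
  define cdX where "cdX i p = dX i p - (\<Sum>q\<in>UNIV. G q i p * X q)" for i p
  define H where "H i j m n = 1/4 * (\<Sum>s\<in>UNIV. w i s * (tors_cov_pt G dG j n m s - 2 * Cv j n m s))"
    for i j m n
  define TQ where "TQ Z1 cdZ k n = (\<Sum>i\<in>UNIV. (G i n k - G i k n) * Z1 i)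
      + 1/2 * (\<Sum>i\<in>UNIV. \<Sum>j\<in>UNIV. w i j * (\<Sum>p\<in>UNIV. cdZ i p * (Cv p n k j - Cv p k n j)))
      + (\<Sum>i\<in>UNIV. \<Sum>j\<in>UNIV. (H i j k n - H i j n k) * cdZ i j)" for Z1 :: "'n \<Rightarrow> complex" and cdZ k n
  define F0 where "F0 k n = (\<Sum>i\<in>UNIV. (G i n k - G i k n) * X i)" for k n
  define cd2F where "cd2F j k n = (\<Sum>i\<in>UNIV. (dG j i n k - dG j i k n) * X i + (G i n k - G i k n) * dX j i)
          - (\<Sum>p\<in>UNIV. G p j k * F0 p n) - (\<Sum>p\<in>UNIV. G p j n * F0 k p)" for j k n
  have cdX: "cd Ga i (fst xi) p x = cdX i p" for i p
    unfolding cd_def cdX_def dX_def G_def X_def by simp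
  have Hc_H: "Hc om Ga i j m n x = H i j m n" for i j m n
    unfolding Hc_def H_def w_def Cv_def G_def dG_def tors_cov_eq_tors_cov_pt[OF dGa] by simp
  have snd_torsQ_TQ: "snd (torsQ om Ga \<zeta>) k n x = TQ (\<lambda>i. snd \<zeta> i x) (\<lambda>i p. cd Ga i (fst \<zeta>) p x) k n"
    if "\<And>i p. smooth_on U (cd Ga i (fst \<zeta>) p)" for \<zeta> k n
    unfolding snd_torsQ[OF U Gs that] TQ_def Hc_H by (simp add: w_def G_def Cv_def)
  have fst_torsQ_F0: "fst (torsQ om Ga xi) k n x = F0 k n" for k n
    unfolding fst_torsQ F0_def G_def X_def by simp
  have "cd2 Ga j (fst (torsQ om Ga xi)) k n x = cd2F j k n" for j k n
    unfolding cd2_def cd2F_def pd_fst_torsQ[OF dGa dx0] fst_torsQ_F0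
    by (simp add: G_def dG_def X_def dX_def algebra_simps)
  then have ract2_snd: "snd (ract2 om Ga (torsQ om Ga xi) a) k n x
       = fst a x * TQ Xb cdX k n + snd a x * F0 k n - 1/2 * (\<Sum>i\<in>UNIV. \<Sum>j\<in>UNIV. w i j * da i * cd2F j k n)"
    unfolding ract2_def snd_conv snd_torsQ_TQ[OF cd_xi] fst_torsQ_F0
    by (simp add: w_def da_def cdX Xb_def[symmetric])
  have ract1_snd: "snd (torsQ om Ga (ract1 om Ga xi a)) k n x
       = TQ (\<lambda>i. fst a x * Xb i + snd a x * X i - 1/2 * (\<Sum>i'\<in>UNIV. \<Sum>j'\<in>UNIV. w i' j' * da i' * cdX j' i))
             (\<lambda>i p. da i * X p + fst a x * cdX i p) k n"
    unfolding snd_torsQ_TQ[OF cd_xia] cd_fst_ract1[OF da0 dx0]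
    by (simp add: ract1_def Xb_def X_def w_def da_def cdX)
  have G_lam: "(\<lambda>a b c. complex_of_real (Ga a b c x)) = G" by (intro ext) (simp add: G_def)
  have dG_lam: "(\<lambda>l a b c. complex_of_real (pd l (Ga a b c) x)) = dG" by (intro ext) (simp add: dG_def)
  show ?thesis
    unfolding ract1_snd ract2_snd
    using torsQ_module_defect_pt[where w=w and G=G and dG=dG and Cv=Cv and X=X and Xb=Xb and da=da and dX=dX
        and aa="fst a x" and ab="snd a x" and k=k and n=n]
    unfolding TQ_def[abs_def] H_def[abs_def] cdX_def[abs_def] F0_def[abs_def] cd2F_def[abs_def]
    by (simp add: tors_cov_eq_tors_cov_pt[OF dGa] da_def X_def w_def G_lam dG_lam)
qed

lemma torsQ_module_defect:
  fixes om :: "'n::finite bivec" and Ga :: "'n chris" and xi :: "'n form1 \<times> 'n form1" and a :: "'n fn \<times> 'n fn"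
  assumes U: "open U" "x \<in> U" and Gs: "\<And>a b c. smooth_on U (Ga a b c)"
    and xs: "lsmooth1 U xi" and as: "lsmooth0 U a"
  shows "snd (torsQ om Ga (ract1 om Ga xi a)) k n x - snd (ract2 om Ga (torsQ om Ga xi) a) k n x
       = (\<Sum>j\<in>UNIV. \<Sum>p\<in>UNIV. pd j (fst a) x * fst xi p x
            * complex_of_real (\<Sum>i\<in>UNIV. om j i x * tors_cov Ga p n k i x))"
proof -
  have dGa: "\<And>a b c. Ga a b c differentiable (at x)" using Gs U smooth_on_differentiable by blast
  have T2: "complex_of_real (tors_cov Ga p n k i x) - complex_of_real (tors_cov Ga p k n i x)
      = 2 * complex_of_real (tors_cov Ga p n k i x)" for p i
    by (simp only: tors_cov_antisym[OF dGa, where p=p and k=k and n=n and i=i]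
        of_real_minus diff_minus_eq_add mult_2)
  have "snd (torsQ om Ga (ract1 om Ga xi a)) k n x - snd (ract2 om Ga (torsQ om Ga xi) a) k n x
      = 1/2 * (\<Sum>j\<in>UNIV. \<Sum>p\<in>UNIV. \<Sum>i\<in>UNIV. 2 * (pd j (fst a) x * fst xi p x
            * (complex_of_real (om j i x) * complex_of_real (tors_cov Ga p n k i x))))"
    unfolding torsQ_module_defect_alternated[OF U Gs xs as] T2 by (simp add: mult_ac)
  also have "\<dots> = (\<Sum>j\<in>UNIV. \<Sum>p\<in>UNIV. \<Sum>i\<in>UNIV. pd j (fst a) x * fst xi p x
            * (complex_of_real (om j i x) * complex_of_real (tors_cov Ga p n k i x)))"
    by (simp only: sum_distrib_left[symmetric]) simp
  finally show ?thesis by (simp add: sum_distrib_left)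
qed

lemma torsQ_right_module_map_iff:
  fixes om :: "'n::finite bivec" and Ga :: "'n chris"
  assumes U: "open U" and Gs: "\<And>a b c. smooth_on U (Ga a b c)"
  shows "right_module_map U om Ga (torsQ om Ga)
     \<longleftrightarrow> (\<forall>x\<in>U. \<forall>j p n k. (\<Sum>i\<in>UNIV. om j i x * tors_cov Ga p n k i x) = 0)"
proof
  assume vanish: "\<forall>x\<in>U. \<forall>j p n k. (\<Sum>i\<in>UNIV. om j i x * tors_cov Ga p n k i x) = 0"
  show "right_module_map U om Ga (torsQ om Ga)"
    unfolding right_module_map_def
  proof (intro allI impI ballI conjI)
    fix xi a x m n
    assume sm: "lsmooth1 U xi \<and> lsmooth0 U a" and x: "x \<in> U"
    show "fst (torsQ om Ga (ract1 om Ga xi a)) m n x = fst (ract2 om Ga (torsQ om Ga xi) a) m n x"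
      by (rule torsQ_ract1_fst)
    from sm have xs: "lsmooth1 U xi" and as: "lsmooth0 U a" by auto
    have "snd (torsQ om Ga (ract1 om Ga xi a)) m n x - snd (ract2 om Ga (torsQ om Ga xi) a) m n x = 0"
      using torsQ_module_defect[where Ga=Ga and om=om and k=m and n=n, OF U x Gs xs as] vanish x
      by simp
    then show "snd (torsQ om Ga (ract1 om Ga xi a)) m n x = snd (ract2 om Ga (torsQ om Ga xi) a) m n x"
      by simp
  qed
next
  assume rmm: "right_module_map U om Ga (torsQ om Ga)"
  show "\<forall>x\<in>U. \<forall>j p n k. (\<Sum>i\<in>UNIV. om j i x * tors_cov Ga p n k i x) = 0"
  proof (intro ballI allI)
    fix x j p n k
    assume x: "x \<in> U"
    define xi :: "'n form1 \<times> 'n form1" where "xi = (dxf p, \<lambda>m y. 0)"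
    define a :: "'n fn \<times> 'n fn" where "a = (\<lambda>y. complex_of_real (y $ j), \<lambda>y. 0)"
    have xs: "lsmooth1 U xi" unfolding lsmooth1_def xi_def dxf_def by (simp add: smooth_on_const)
    have as: "lsmooth0 U a" unfolding lsmooth0_def a_def by (simp add: smooth_on_const smooth_on_of_real_coord)
    have "snd (torsQ om Ga (ract1 om Ga xi a)) k n x = snd (ract2 om Ga (torsQ om Ga xi) a) k n x"
      using rmm xs as x unfolding right_module_map_def by blast
    then have "(\<Sum>j'\<in>UNIV. \<Sum>p'\<in>UNIV. pd j' (fst a) x * fst xi p' x
            * complex_of_real (\<Sum>i\<in>UNIV. om j' i x * tors_cov Ga p' n k i x)) = 0"
      using torsQ_module_defect[where Ga=Ga and om=om and k=k and n=n, OF U x Gs xs as] by simp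
    moreover have "pd j' (fst a) x * fst xi p' x * c = (if p' = p then (if j' = j then c else 0) else 0)"
      for j' p' c
      by (simp add: a_def xi_def dxf_def pd_of_real_coord)
    ultimately have "complex_of_real (\<Sum>i\<in>UNIV. om j i x * tors_cov Ga p n k i x) = 0"
      by simp
    then show "(\<Sum>i\<in>UNIV. om j i x * tors_cov Ga p n k i x) = 0"
      by (simp only: of_real_eq_0_iff)
  qed
qed

theorem lemma4p8:
  fixes U :: "(real^'n::finite) set"
    and om :: "'n bivec" and Ga :: "'n chris"
  assumes "open U"
    and "\<forall>i j. smooth_on U (om i j)"
    and "\<forall>i j k. smooth_on U (Ga i j k)"
    and "poisson_bivector U om"
    and "poisson_compatible U om Ga"
  shows "(\<forall>eta xi. lsmooth1 U eta \<and> lsmooth1 U xi \<longrightarrow>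
            (\<forall>x\<in>U. \<forall>k n.
               fst (wedgeQ om Ga (ladd (sigmaQ_el om Ga eta xi) (tens1 om Ga eta xi))) k n x = 0 \<and>
               snd (wedgeQ om Ga (ladd (sigmaQ_el om Ga eta xi) (tens1 om Ga eta xi))) k n x =
                 alt (\<lambda>k n x. (1/2) * (\<Sum>j\<in>UNIV. \<Sum>p\<in>UNIV. \<Sum>i\<in>UNIV.
                        fst xi j x * fst eta p x *
                        complex_of_real (om j i x * tors_cov Ga p n k i x))) k n x))
         \<and> (right_module_map U om Ga (torsQ om Ga) \<longleftrightarrow>
              (\<forall>x\<in>U. \<forall>j p n k. (\<Sum>i\<in>UNIV. om j i x * tors_cov Ga p n k i x) = 0))"
proof -
  have os: "\<And>i j. smooth_on U (om i j)" and Gs: "\<And>a b c. smooth_on U (Ga a b c)"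
    using assms(2,3) by blast+
  have "fst (wedgeQ om Ga (ladd (sigmaQ_el om Ga eta xi) (tens1 om Ga eta xi))) k n x = 0 \<and>
        snd (wedgeQ om Ga (ladd (sigmaQ_el om Ga eta xi) (tens1 om Ga eta xi))) k n x =
          alt (\<lambda>k n x. (1/2) * (\<Sum>j\<in>UNIV. \<Sum>p\<in>UNIV. \<Sum>i\<in>UNIV.
                 fst xi j x * fst eta p x * complex_of_real (om j i x * tors_cov Ga p n k i x))) k n x"
    if "lsmooth1 U eta" "x \<in> U" for eta xi x k n
    using wedgeQ_sigma_plus_id[where om=om and Ga=Ga, OF assms(1) that(2) os Gs assms(4,5) that(1)]
    by blast
  moreover have "right_module_map U om Ga (torsQ om Ga)
      \<longleftrightarrow> (\<forall>x\<in>U. \<forall>j p n k. (\<Sum>i\<in>UNIV. om j i x * tors_cov Ga p n k i x) = 0)"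
    by (rule torsQ_right_module_map_iff[where om=om and Ga=Ga, OF assms(1) Gs])
  ultimately show ?thesis by blast
qed

end
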